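(* Let $\Phi(x)=\tanh x$, let $0<\nu\ll1$ and let $T_\nu>0$ satisfy $1-\Phi(T_\nu)=\nu$. For $0<\epsilon,\nu\ll1$, at time $T_\nu$ the image under the flow of the system below of the curve $\Sigma_o^p=\{(r,s,\psi):r=\psi=0\}$ (near the point of the $\epsilon=0$ hole orbit at $x=0$) lies within an $O(\nu)$ distance of the slow manifold $\mathcal M_\epsilon^+$, and the $\psi$-coordinates of points on this image are \[ \psi=\Big[\frac23\Big(d_1+d_3+\frac85d_4\Big)+O(\nu)\Big]\epsilon+O(\epsilon+\sigma)\epsilon . \]
   Context: Consider, for real parameters $d_1,d_3,d_4$, small $\epsilon>0$, a small parameter $\sigma$ independent of $\epsilon$ and a function $\sigma^*(\epsilon)$, the system \[ r'=s,\quad s'=-2r(1-r^2)+r\psi^2+2\epsilon^2d_1r\big[(d_1+d_3)(1-r^2)+d_4(1-r^4)+\epsilon^2\sigma^*+\sigma\big], \] \[ \psi'=-2\frac{s}{r}\psi+2\epsilon\big[(d_1+d_3)(1-r^2)+d_4(1-r^4)+\epsilon^2\sigma^*+\sigma\big], \] which describes steady states $\phi=re^{i\int_0^x\psi}$, $s=r'$, of the perturbed NLS / complex Ginzburg–Landau equation with $d_2+d_3+d_4=-(\epsilon^2\sigma^*+\sigma)$. For $\epsilon=0$ the hole solution $(r,s,\psi)=(\Phi,\Phi',0)$ lies on $\Sigma_o^p$ at $x=0$ (with $s(0)=1$) and tends to the curve of equilibria $\mathcal M_0^+=\{s=0,\ r=\sqrt{1-\psi^2/2},\ \psi^2<2/3\}$;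 $\mathcal M_\epsilon^+$ denotes the normally hyperbolic slow manifold which perturbs $\mathcal M_0^+$ for small $\epsilon$. *)

theory Defs
  imports "HOL-Analysis.Analysis"
begin

text \<open>The common bracket
  (d1+d3)(1-r^2) + d4(1-r^4) + eps^2 sigma* + sigma,
  where sst stands for the value sigma*(eps).\<close>
definition bracket :: "real \<Rightarrow> real \<Rightarrow> real \<Rightarrow> real \<Rightarrow> real \<Rightarrow> real \<Rightarrow> real \<Rightarrow> real" where
  "bracket d1 d3 d4 sst eps sig r =
     (d1 + d3) * (1 - r^2) + d4 * (1 - r^4) + eps^2 * sst + sig"

definition hole_sys_sol ::
  "real \<Rightarrow> real \<Rightarrow> real \<Rightarrow> real \<Rightarrow> real \<Rightarrow> real \<Rightarrow> real set
     \<Rightarrow> (real \<Rightarrow> real) \<Rightarrow> (real \<Rightarrow> real) \<Rightarrow> (real \<Rightarrow> real) \<Rightarrow> bool" where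
  "hole_sys_sol d1 d3 d4 sst eps sig J r s psi \<longleftrightarrow>
     (\<forall>x\<in>J. r x \<noteq> 0 \<and>
        (r has_real_derivative s x) (at x within J) \<and>
        (s has_real_derivative
            (- 2 * r x * (1 - (r x)^2) + r x * (psi x)^2
             + 2 * eps^2 * d1 * r x * bracket d1 d3 d4 sst eps sig (r x))) (at x within J) \<and>
        (psi has_real_derivative
            (- 2 * (s x / r x) * psi x + 2 * eps * bracket d1 d3 d4 sst eps sig (r x))) (at x within J))"

definition orbit_from_Sigma ::
  "real \<Rightarrow> real \<Rightarrow> real \<Rightarrow> real \<Rightarrow> real \<Rightarrow> real \<Rightarrow> real \<Rightarrow> real
     \<Rightarrow> (real \<Rightarrow> real) \<Rightarrow> (real \<Rightarrow> real) \<Rightarrow> (real \<Rightarrow> real) \<Rightarrow> bool" where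
  "orbit_from_Sigma d1 d3 d4 sst eps sig s0 T r s psi \<longleftrightarrow>
     continuous_on {0..T} r \<and> continuous_on {0..T} s \<and> continuous_on {0..T} psi \<and>
     r 0 = 0 \<and> s 0 = s0 \<and> psi 0 = 0 \<and>
     hole_sys_sol d1 d3 d4 sst eps sig {0<..T} r s psi"

text \<open>M is a family of slow manifolds M_eps^+ (indexed by eps and sigma, for
  0 < eps < e0 and |sigma| < s0): each M eps sig is a continuous curve given as a graph
  over psi in [-a,a] (a^2 < 2/3), K*eps-close to M_0^+ = {s=0, r = sqrt(1-psi^2/2)},
  and locally invariant under the flow of the system.\<close>
definition slow_manifold_family ::
  "real \<Rightarrow> real \<Rightarrow> real \<Rightarrow> (real \<Rightarrow> real) \<Rightarrow> real \<Rightarrow> real \<Rightarrow> real \<Rightarrow> real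
     \<Rightarrow> (real \<Rightarrow> real \<Rightarrow> (real \<times> real \<times> real) set) \<Rightarrow> bool" where
  "slow_manifold_family d1 d3 d4 sigst e0 sg0 K a M \<longleftrightarrow>
     0 < e0 \<and> 0 < sg0 \<and> 0 < a \<and> a^2 < 2/3 \<and>
     (\<forall>eps\<in>{0<..<e0}. \<forall>sig. \<bar>sig\<bar> < sg0 \<longrightarrow>
        (\<exists>h :: real \<Rightarrow> real \<times> real.
           continuous_on {-a..a} h \<and>
           M eps sig = (\<lambda>p. (fst (h p), snd (h p), p)) ` {-a..a} \<and>
           (\<forall>p\<in>{-a..a}. dist (h p) (sqrt (1 - p^2 / 2), 0) \<le> K * eps)) \<and>
        (\<forall>q\<in>M eps sig. \<bar>snd (snd q)\<bar> < a \<longrightarrow>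
           (\<exists>\<tau>>0. \<exists>r s psi.
              hole_sys_sol d1 d3 d4 (sigst eps) eps sig {-\<tau>..\<tau>} r s psi \<and>
              (r 0, s 0, psi 0) = q \<and>
              (\<forall>t\<in>{-\<tau>..\<tau>}. (r t, s t, psi t) \<in> M eps sig))))"

end

theory Submission
  imports Defs
begin

(* For eps = 0 the orbit through Sigma_o^p is the hole (r, s, psi) = (tanh, 1 - tanh^2, 0).
  Along every orbit, (r^2 psi)' = 2 eps r^2 B(r), where B is the bracket, so psi is a moment of r
  divided by r^2. As long as s stays between m = (1 - tanh^2 T)/2 and 2, r grows like t and psi is
  O(eps t); the remaining terms of the s-equation are then an O(eps^2) forcing, and a Gronwall
  estimate for (r - tanh)^2 + (s - (1 - tanh^2))^2 keeps the orbit rho-close to the hole on [0, T]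
  once s0 - 1 and eps are small. Closeness in turn keeps s strictly between m and 2, which closes
  the continuity argument. Orbits exist because the same estimates apply to a Volterra equation
  for s alone, with r the integral of s clamped to [m, 2], solved by Picard iteration; the clamp
  is inactive along the solution. At x = T, the integral of tanh^2 B0(tanh) is explicit, which
  gives psi T = 2/3 (d1 + d3 + 8/5 d4) eps + O(nu eps); together with r T = 1 + O(nu) and
  s T = O(nu) this puts the endpoint O(nu)-close to the slow manifold, itself O(eps)-close to
  M_0^+. *)

lemma abs_mult_diff_le:
  fixes a1 a2 b1 b2 :: real
  assumes "\<bar>a1 - a2\<bar> \<le> A" "\<bar>b1 - b2\<bar> \<le> B" "\<bar>b1\<bar> \<le> Kb" "\<bar>a2\<bar> \<le> Ka"
  shows "\<bar>a1 * b1 - a2 * b2\<bar> \<le> A * Kb + Ka * B"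
proof -
  have "\<bar>a1 * b1 - a2 * b2\<bar> = \<bar>(a1 - a2) * b1 + a2 * (b1 - b2)\<bar>"
    by (simp add: algebra_simps)
  also have "\<dots> \<le> \<bar>a1 - a2\<bar> * \<bar>b1\<bar> + \<bar>a2\<bar> * \<bar>b1 - b2\<bar>"
    by (metis abs_mult abs_triangle_ineq)
  also have "\<dots> \<le> A * Kb + Ka * B"
    using assms by (intro add_mono mult_mono) auto
  finally show ?thesis .
qed

lemma mult_le_abs_mult_bound:
  fixes a y B :: real
  assumes "\<bar>y\<bar> \<le> B"
  shows "a * y \<le> \<bar>a\<bar> * B"
proof -
  have "a * y \<le> \<bar>a\<bar> * \<bar>y\<bar>" by (metis abs_ge_self abs_mult)
  also have "\<dots> \<le> \<bar>a\<bar> * B" using assms by (intro mult_left_mono) auto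
  finally show ?thesis .
qed

lemma sum_squares_le_imp_abs_le:
  fixes a b \<rho> :: real
  assumes "a^2 + b^2 \<le> \<rho>^2" "0 \<le> \<rho>"
  shows "\<bar>a\<bar> \<le> \<rho>" "\<bar>b\<bar> \<le> \<rho>"
proof -
  have "a^2 \<le> \<rho>^2" "b^2 \<le> \<rho>^2"
    using assms(1) zero_le_power2[of a] zero_le_power2[of b] by linarith+
  then show "\<bar>a\<bar> \<le> \<rho>" "\<bar>b\<bar> \<le> \<rho>"
    using power2_le_iff_abs_le[OF assms(2)] by simp_all
qed

lemma abs_square_diff_le:
  fixes x y X :: real
  assumes "\<bar>x\<bar> \<le> X" "\<bar>y\<bar> \<le> X"
  shows "\<bar>x^2 - y^2\<bar> \<le> 2 * X * \<bar>x - y\<bar>"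
proof -
  have "\<bar>x^2 - y^2\<bar> = \<bar>x + y\<bar> * \<bar>x - y\<bar>"
    by (simp add: power2_eq_square algebra_simps flip: abs_mult)
  also have "\<dots> \<le> 2 * X * \<bar>x - y\<bar>"
    using assms by (intro mult_right_mono) auto
  finally show ?thesis .
qed

lemma abs_cube_diff_le:
  fixes x y X :: real
  assumes "\<bar>x\<bar> \<le> X" "\<bar>y\<bar> \<le> X"
  shows "\<bar>x^3 - y^3\<bar> \<le> 3 * X^2 * \<bar>x - y\<bar>"
proof -
  have "\<bar>x^2 + x * y + y^2\<bar> \<le> \<bar>x^2 + x * y\<bar> + \<bar>y^2\<bar>"
    by (rule abs_triangle_ineq)
  also have "\<bar>x^2 + x * y\<bar> \<le> \<bar>x^2\<bar> + \<bar>x * y\<bar>"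
    by (rule abs_triangle_ineq)
  finally have "\<bar>x^2 + x * y + y^2\<bar> \<le> \<bar>x\<bar>^2 + \<bar>x\<bar> * \<bar>y\<bar> + \<bar>y\<bar>^2"
    by (simp add: abs_mult)
  also have "\<dots> \<le> X^2 + X * X + X^2"
    using assms by (intro add_mono mult_mono power_mono) auto
  also have "\<dots> = 3 * X^2"
    by (simp add: power2_eq_square)
  finally have "\<bar>x^2 + x * y + y^2\<bar> * \<bar>x - y\<bar> \<le> 3 * X^2 * \<bar>x - y\<bar>"
    by (intro mult_right_mono) auto
  moreover have "\<bar>x^3 - y^3\<bar> = \<bar>x^2 + x * y + y^2\<bar> * \<bar>x - y\<bar>"
    by (simp add: power2_eq_square power3_eq_cube algebra_simps flip: abs_mult)
  ultimately show ?thesis by simp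
qed

lemma abs_one_minus_power_le:
  fixes \<nu> :: real
  assumes "0 \<le> \<nu>" "\<nu> \<le> 1"
  shows "\<bar>(1 - \<nu>) ^ n - 1\<bar> \<le> n * \<nu>"
proof -
  have "1 + real n * (- \<nu>) \<le> (1 + (- \<nu>)) ^ n"
    by (rule Bernoulli_inequality) (use assms in simp)
  moreover have "(1 - \<nu>) ^ n \<le> 1"
    using assms by (intro power_le_one) auto
  ultimately show ?thesis by (simp add: abs_le_iff)
qed

lemma clamp_real_bounds: "(a::real) \<le> b \<Longrightarrow> a \<le> clamp a b x \<and> clamp a b x \<le> b"
  using clamp_in_interval[of a b x] by simp

lemma abs_clamp_real_diff_le: "\<bar>clamp a b x - clamp a b (y::real)\<bar> \<le> \<bar>x - y\<bar>"
  using dist_clamps_le_dist_args[of a b x y] by (simp add: dist_real_def)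

lemma continuous_on_clamp_real:
  "continuous_on S f \<Longrightarrow> continuous_on S (\<lambda>x. clamp a b (f x :: real))"
  using clamp_continuous_on[of a b "\<lambda>x. x" UNIV]
  by (metis continuous_on_compose2 continuous_on_id subset_UNIV)

section \<open>Gronwall, continuity and Volterra arguments\<close>

lemma gronwall_affine:
  fixes f f' :: "real \<Rightarrow> real"
  assumes t: "0 \<le> t" and cont: "continuous_on {0..t} f"
    and der: "\<And>x. x \<in> {0<..<t} \<Longrightarrow> (f has_real_derivative f' x) (at x)"
    and bound: "\<And>x. x \<in> {0<..<t} \<Longrightarrow> f' x \<le> k * f x + c"
    and c: "0 \<le> c" and k: "0 \<le> k"
  shows "f t \<le> (f 0 + c * t) * exp (k * t)"
proof -
  define g where "g u = f u * exp (- k * u) - c * u" for u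
  have "g t \<le> g 0"
  proof (rule DERIV_nonpos_imp_decreasing_open[OF t])
    fix x assume x: "0 < x" "x < t"
    have "(g has_real_derivative f' x * exp (- k * x) + f x * (exp (- k * x) * (- k)) - c) (at x)"
      unfolding g_def by (auto intro!: derivative_eq_intros der x)
    then have g': "(g has_real_derivative (f' x - k * f x) * exp (- k * x) - c) (at x)"
      by (simp add: algebra_simps)
    have "(f' x - k * f x) * exp (- k * x) \<le> c * exp (- k * x)"
      using bound[of x] x by (intro mult_right_mono) auto
    also have "c * exp (- k * x) \<le> c"
      using c k x by (simp add: mult_left_le)
    finally show "\<exists>y. (g has_real_derivative y) (at x) \<and> y \<le> 0"
      using g' by (intro exI[of _ "(f' x - k * f x) * exp (- k * x) - c"]) simp
  qed (auto simp: g_def intro!: continuous_intros cont)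
  then have "f t * exp (- k * t) * exp (k * t) \<le> (f 0 + c * t) * exp (k * t)"
    unfolding g_def by (intro mult_right_mono) auto
  then show ?thesis by (simp add: mult.assoc flip: exp_add)
qed

lemma continuous_stays_in_interval:
  fixes s :: "real \<Rightarrow> real"
  assumes cont: "continuous_on {0..T} s" and start: "m < s 0" "s 0 < M"
    and step: "\<And>t. t \<in> {0..T} \<Longrightarrow> \<forall>u\<in>{0..t}. m \<le> s u \<and> s u \<le> M \<Longrightarrow> m < s t \<and> s t < M"
  shows "\<forall>t\<in>{0..T}. m \<le> s t \<and> s t \<le> M"
proof (rule ccontr)
  define S where "S = {0..T} \<inter> s -` ({..m} \<union> {M..})"
  assume "\<not> ?thesis"
  then have "S \<noteq> {}" unfolding S_def by force
  moreover have "closed S"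
    unfolding S_def by (intro continuous_closed_preimage cont) auto
  moreover have "bounded S"
    unfolding S_def by (rule bounded_subset[of "{0..T}"]) auto
  ultimately have "S \<noteq> {}" "compact S"
    by (auto simp: compact_eq_bounded_closed)
  then obtain t1 where t1: "t1 \<in> S" and first: "\<forall>t\<in>S. t1 \<le> t"
    using compact_attains_inf by metis
  have t1T: "t1 \<in> {0..T}" using t1 unfolding S_def by auto
  have cont1: "continuous_on {0..t1} s"
    using t1T by (intro continuous_on_subset[OF cont]) auto
  have inside_before: "m < s u \<and> s u < M" if "u \<in> {0..t1}" "u < t1" for u
    using first that t1T unfolding S_def by force
  have "m \<le> s t1"
  proof (rule ccontr)
    assume below: "\<not> m \<le> s t1"
    then obtain u where "u \<in> {0..t1}" "s u = m"
      using IVT2'[of s t1 m 0, OF _ _ _ cont1] start t1T by fastforce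
    then show False using inside_before[of u] below by (cases "u < t1") auto
  qed
  moreover have "s t1 \<le> M"
  proof (rule ccontr)
    assume above: "\<not> s t1 \<le> M"
    then obtain u where "u \<in> {0..t1}" "s u = M"
      using IVT'[of s 0 M t1, OF _ _ _ cont1] start t1T by fastforce
    then show False using inside_before[of u] above by (cases "u < t1") auto
  qed
  ultimately have "\<forall>u\<in>{0..t1}. m \<le> s u \<and> s u \<le> M"
    using inside_before by (metis atLeastAtMost_iff order_less_imp_le order_le_less)
  then show False using step[OF t1T] t1 unfolding S_def by auto
qed

lemma exp_weighted_integral_le:
  fixes f :: "real \<Rightarrow> real"
  assumes y: "0 \<le> y" and k: "0 < k" and c: "0 \<le> c" and cont: "continuous_on {0..y} f"
    and bound: "\<And>u. u \<in> {0..y} \<Longrightarrow> \<bar>f u\<bar> \<le> c * exp (k * u)"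
  shows "exp (- k * y) * \<bar>integral {0..y} f\<bar> \<le> c / k"
proof -
  have "(\<lambda>u. c * exp (k * u)) integrable_on {0..y}"
    by (intro integrable_continuous_real continuous_intros)
  then have "norm (integral {0..y} f) \<le> integral {0..y} (\<lambda>u. c * exp (k * u))"
    using bound cont by (intro integral_norm_bound_integral) (auto intro: integrable_continuous_real)
  also have "\<dots> = c * exp (k * y) / k - c / k"
  proof -
    have "((\<lambda>u. c * exp (k * u)) has_integral (c * exp (k * y) / k - c * exp (k * 0) / k)) {0..y}"
      using y k by (intro fundamental_theorem_of_calculus)
        (auto intro!: derivative_eq_intros simp flip: has_real_derivative_iff_has_vector_derivative)
    then show ?thesis by (subst integral_unique) auto
  qed
  also have "\<dots> \<le> c * exp (k * y) / k"
    using c k by simp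
  finally have "exp (- k * y) * \<bar>integral {0..y} f\<bar> \<le> exp (- k * y) * (c * exp (k * y) / k)"
    by (intro mult_left_mono) auto
  also have "\<dots> = c / k"
    by (simp add: mult_exp_exp)
  finally show ?thesis .
qed

lemma clamp_extension_in_bcontfun:
  fixes h :: "real \<Rightarrow> real"
  assumes T: "0 \<le> T" and h: "continuous_on {0..T} h"
  shows "(\<lambda>x. h (clamp 0 T x)) \<in> bcontfun"
proof -
  have "range (\<lambda>x. h (clamp 0 T x)) \<subseteq> h ` {0..T}"
    using clamp_real_bounds[OF T] by auto
  moreover have "bounded (h ` {0..T})"
    by (intro compact_imp_bounded compact_continuous_image h) auto
  moreover have "continuous_on UNIV (\<lambda>x. h (clamp 0 T x))"
    using clamp_real_bounds[OF T]
    by (intro continuous_on_compose2[OF h continuous_on_clamp_real[OF continuous_on_id]]) auto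
  ultimately show ?thesis
    unfolding bcontfun_def by (auto intro: bounded_subset)
qed

text \<open>Picard iteration in the space of bounded continuous functions, with the weighted norm
  sup |g x| exp (- k x), k = 2 L + 1, for which the Picard map is a 1/2-contraction.\<close>
lemma volterra_fixed_point:
  fixes G :: "(real \<Rightarrow> real) \<Rightarrow> real \<Rightarrow> real"
  assumes T: "0 \<le> T" and L: "0 \<le> L"
    and cont: "\<And>s. continuous_on {0..T} s \<Longrightarrow> continuous_on {0..T} (G s)"
    and lip: "\<And>s1 s2 t D. continuous_on {0..T} s1 \<Longrightarrow> continuous_on {0..T} s2 \<Longrightarrow> t \<in> {0..T} \<Longrightarrow>
      \<forall>v\<in>{0..t}. \<bar>s1 v - s2 v\<bar> \<le> D \<Longrightarrow> \<bar>G s1 t - G s2 t\<bar> \<le> L * D"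
  shows "\<exists>s. continuous_on {0..T} s \<and> (\<forall>x\<in>{0..T}. s x = s0 + integral {0..x} (G s))"
proof -
  define k where "k = 2 * L + 1"
  have k: "0 < k" unfolding k_def using L by simp
  define cl where "cl = clamp 0 T"
  have cl_in: "cl x \<in> {0..T}" for x
    unfolding cl_def using clamp_real_bounds[OF T] by simp
  have cl_id: "x \<in> {0..T} \<Longrightarrow> cl x = x" for x
    unfolding cl_def by simp
  have cl_cont: "continuous_on UNIV cl"
    unfolding cl_def using continuous_on_clamp_real[OF continuous_on_id] by simp
  define unweight :: "(real \<Rightarrow>\<^sub>C real) \<Rightarrow> real \<Rightarrow> real"
    where "unweight g x = apply_bcontfun g x * exp (k * cl x)" for g x
  have unweight_cont: "continuous_on {0..T} (unweight g)" for g
    unfolding unweight_def by (intro continuous_intros continuous_on_compose2[OF cl_cont]) auto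
  define h where "h g y = exp (- k * y) * (s0 + integral {0..y} (G (unweight g)))" for g y
  have h_cont: "continuous_on {0..T} (h g)" for g
    unfolding h_def
    by (intro continuous_intros indefinite_integral_continuous_1 integrable_continuous_real
        cont unweight_cont)
  have h_bcontfun: "(\<lambda>x. h g (cl x)) \<in> bcontfun" for g
    unfolding cl_def by (rule clamp_extension_in_bcontfun[OF T h_cont])
  define \<Phi> where "\<Phi> g = Bcontfun (\<lambda>x. h g (cl x))" for g
  have \<Phi>_apply: "apply_bcontfun (\<Phi> g) x = h g (cl x)" for g x
    unfolding \<Phi>_def using h_bcontfun by (simp add: Bcontfun_inverse)
  have "dist (\<Phi> g1) (\<Phi> g2) \<le> 1/2 * dist g1 g2" for g1 g2
  proof (rule dist_bound)
    fix x
    define D where "D = dist g1 g2"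
    define y where "y = cl x"
    have y: "y \<in> {0..T}" unfolding y_def by (rule cl_in)
    have pointwise: "\<bar>G (unweight g1) u - G (unweight g2) u\<bar> \<le> L * D * exp (k * u)"
      if u: "u \<in> {0..T}" for u
      unfolding mult.assoc
    proof (rule lip[OF unweight_cont unweight_cont u], intro ballI)
      fix v assume v: "v \<in> {0..u}"
      then have "\<bar>unweight g1 v - unweight g2 v\<bar> = \<bar>apply_bcontfun g1 v - apply_bcontfun g2 v\<bar> * exp (k * v)"
        unfolding unweight_def using u by (simp add: cl_id abs_mult flip: left_diff_distrib)
      also have "\<dots> \<le> D * exp (k * u)"
        using dist_bounded[of g1 v g2] v k unfolding D_def dist_real_def by (intro mult_mono) auto
      finally show "\<bar>unweight g1 v - unweight g2 v\<bar> \<le> D * exp (k * u)" .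
    qed
    have "continuous_on {0..T} (\<lambda>u. G (unweight g1) u - G (unweight g2) u)"
      by (intro continuous_intros cont unweight_cont)
    then have "continuous_on {0..y} (\<lambda>u. G (unweight g1) u - G (unweight g2) u)"
      by (rule continuous_on_subset) (use y in auto)
    then have "exp (- k * y) * \<bar>integral {0..y} (\<lambda>u. G (unweight g1) u - G (unweight g2) u)\<bar> \<le> L * D / k"
      using pointwise y k L unfolding D_def by (intro exp_weighted_integral_le) auto
    also have "\<dots> \<le> 1/2 * D"
      using k L unfolding k_def D_def by (simp add: field_simps)
    finally show "dist (apply_bcontfun (\<Phi> g1) x) (apply_bcontfun (\<Phi> g2) x) \<le> 1/2 * dist g1 g2"
      using y by (simp add: \<Phi>_apply h_def dist_real_def abs_mult integral_diff
          integrable_continuous_real cont unweight_cont continuous_on_subset[of "{0..T}"]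
          D_def flip: y_def right_diff_distrib)
  qed
  then obtain g where g: "\<Phi> g = g"
    using banach_fix_type[of "1/2" \<Phi>] by auto
  show ?thesis
  proof (intro exI[of _ "unweight g"] conjI unweight_cont ballI)
    fix x assume x: "x \<in> {0..T}"
    have "unweight g x = h g x * exp (k * x)"
      using \<Phi>_apply[of g x] g unfolding unweight_def by (simp add: cl_id[OF x])
    then show "unweight g x = s0 + integral {0..x} (G (unweight g))"
      by (simp add: h_def mult_exp_exp)
  qed
qed

lemma eventually_small_parameters:
  fixes P Q R :: "real \<Rightarrow> bool"
  assumes "eventually P (at_right 0)" "eventually Q (nhds 0)" "eventually R (nhds 1)"
    and "\<And>eps sig s0. 0 < eps \<Longrightarrow> P eps \<Longrightarrow> Q sig \<Longrightarrow> R s0 \<Longrightarrow> G eps sig s0"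
  shows "\<exists>\<epsilon>1>0. \<exists>\<sigma>1>0. \<exists>\<delta>>0. \<forall>eps\<in>{0<..<\<epsilon>1}. \<forall>sig. \<bar>sig\<bar> < \<sigma>1 \<longrightarrow>
    (\<forall>s0. \<bar>s0 - 1\<bar> < \<delta> \<longrightarrow> G eps sig s0)"
proof -
  obtain \<epsilon>1 where \<epsilon>1: "0 < \<epsilon>1" "\<And>eps. 0 < eps \<Longrightarrow> eps < \<epsilon>1 \<Longrightarrow> P eps"
    using assms(1) unfolding eventually_at_right_field by auto
  obtain \<sigma>1 where \<sigma>1: "0 < \<sigma>1" "\<And>sig. \<bar>sig\<bar> < \<sigma>1 \<Longrightarrow> Q sig"
    using assms(2) unfolding eventually_nhds_metric by (auto simp: dist_real_def)
  obtain \<delta> where \<delta>: "0 < \<delta>" "\<And>s0. \<bar>s0 - 1\<bar> < \<delta> \<Longrightarrow> R s0"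
    using assms(3) unfolding eventually_nhds_metric by (auto simp: dist_real_def)
  show ?thesis
    using \<epsilon>1 \<sigma>1 \<delta> assms(4) by (intro exI[of _ \<epsilon>1] exI[of _ \<sigma>1] exI[of _ \<delta>] conjI) auto
qed

lemma lipschitz_on_mult_real:
  fixes f g :: "real \<Rightarrow> real"
  assumes "Lf-lipschitz_on S f" "Lg-lipschitz_on S g"
    and "\<And>x. x \<in> S \<Longrightarrow> \<bar>f x\<bar> \<le> Bf" "\<And>x. x \<in> S \<Longrightarrow> \<bar>g x\<bar> \<le> Bg" "0 \<le> Bf" "0 \<le> Bg"
  shows "(Lf * Bg + Bf * Lg)-lipschitz_on S (\<lambda>x. f x * g x)"
proof (rule lipschitz_onI)
  fix x y assume xy: "x \<in> S" "y \<in> S"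
  have "\<bar>f x - f y\<bar> \<le> Lf * \<bar>x - y\<bar>" "\<bar>g x - g y\<bar> \<le> Lg * \<bar>x - y\<bar>"
    using lipschitz_onD[OF assms(1) xy] lipschitz_onD[OF assms(2) xy] by (simp_all add: dist_real_def)
  then have "\<bar>f x * g x - f y * g y\<bar> \<le> Lf * \<bar>x - y\<bar> * Bg + Bf * (Lg * \<bar>x - y\<bar>)"
    using assms(3,4) xy by (intro abs_mult_diff_le) auto
  then show "dist (f x * g x) (f y * g y) \<le> (Lf * Bg + Bf * Lg) * dist x y"
    by (simp add: dist_real_def algebra_simps)
qed (use lipschitz_on_nonneg[OF assms(1)] lipschitz_on_nonneg[OF assms(2)] assms(5,6) in simp)

lemma lipschitz_on_square_interval:
  fixes X :: real
  assumes "0 \<le> X"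
  shows "(2 * X)-lipschitz_on {-X..X} (\<lambda>x. x^2)"
proof (rule lipschitz_onI)
  fix x y :: real assume "x \<in> {-X..X}" "y \<in> {-X..X}"
  then show "dist (x^2) (y^2) \<le> 2 * X * dist x y"
    unfolding dist_real_def by (intro abs_square_diff_le) auto
qed (use assms in simp)

definition hole_rhs :: "real \<Rightarrow> (real \<Rightarrow> real) \<Rightarrow> real \<Rightarrow> real \<Rightarrow> real" where
  "hole_rhs \<gamma> \<beta> r p = - 2 * r * (1 - r^2) + r * p^2 + \<gamma> * r * \<beta> r"

lemma hole_rhs_diff_le:
  fixes r1 r2 p1 p2 X P :: real
  assumes r: "\<bar>r1\<bar> \<le> X" "\<bar>r2\<bar> \<le> X" and p: "\<bar>p1\<bar> \<le> P" "\<bar>p2\<bar> \<le> P"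
    and bounded: "\<And>x. \<bar>x\<bar> \<le> X \<Longrightarrow> \<bar>\<beta> x\<bar> \<le> Bm" and lip: "LB-lipschitz_on {-X..X} \<beta>"
  shows "\<bar>hole_rhs \<gamma> \<beta> r1 p1 - hole_rhs \<gamma> \<beta> r2 p2\<bar>
    \<le> (2 + 6 * X^2 + P^2 + \<bar>\<gamma>\<bar> * (Bm + X * LB)) * \<bar>r1 - r2\<bar> + X * (2 * P) * \<bar>p1 - p2\<bar>"
proof -
  have cube: "\<bar>r1^3 - r2^3\<bar> \<le> 3 * X^2 * \<bar>r1 - r2\<bar>"
    by (rule abs_cube_diff_le[OF r])
  have "\<bar>p1\<bar>^2 \<le> P^2" using p(1) by (intro power_mono) auto
  then have quadratic: "\<bar>r1 * p1^2 - r2 * p2^2\<bar> \<le> \<bar>r1 - r2\<bar> * P^2 + X * (2 * P * \<bar>p1 - p2\<bar>)"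
    by (intro abs_mult_diff_le abs_square_diff_le p r(2)) auto
  have "\<bar>\<beta> r1 - \<beta> r2\<bar> \<le> LB * \<bar>r1 - r2\<bar>"
    using lipschitz_onD[OF lip, of r1 r2] r by (auto simp: dist_real_def abs_le_iff)
  then have "\<bar>r1 * \<beta> r1 - r2 * \<beta> r2\<bar> \<le> \<bar>r1 - r2\<bar> * Bm + X * (LB * \<bar>r1 - r2\<bar>)"
    by (intro abs_mult_diff_le bounded r) auto
  then have forcing: "\<bar>\<gamma> * (r1 * \<beta> r1 - r2 * \<beta> r2)\<bar> \<le> \<bar>\<gamma>\<bar> * (\<bar>r1 - r2\<bar> * Bm + X * (LB * \<bar>r1 - r2\<bar>))"
    unfolding abs_mult by (intro mult_left_mono) auto
  have triangle: "\<bar>- 2 * a + 2 * b + c + d\<bar> \<le> 2 * \<bar>a\<bar> + 2 * \<bar>b\<bar> + \<bar>c\<bar> + \<bar>d\<bar>" for a b c d :: real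
    by arith
  have eq: "hole_rhs \<gamma> \<beta> r1 p1 - hole_rhs \<gamma> \<beta> r2 p2
      = - 2 * (r1 - r2) + 2 * (r1^3 - r2^3) + (r1 * p1^2 - r2 * p2^2) + \<gamma> * (r1 * \<beta> r1 - r2 * \<beta> r2)"
    unfolding hole_rhs_def by (simp add: algebra_simps power2_eq_square power3_eq_cube)
  have "\<bar>hole_rhs \<gamma> \<beta> r1 p1 - hole_rhs \<gamma> \<beta> r2 p2\<bar>
      \<le> 2 * \<bar>r1 - r2\<bar> + 2 * \<bar>r1^3 - r2^3\<bar> + \<bar>r1 * p1^2 - r2 * p2^2\<bar>
        + \<bar>\<gamma> * (r1 * \<beta> r1 - r2 * \<beta> r2)\<bar>"
    unfolding eq by (rule triangle)
  also have "\<dots> \<le> 2 * \<bar>r1 - r2\<bar> + 2 * (3 * X^2 * \<bar>r1 - r2\<bar>) + (\<bar>r1 - r2\<bar> * P^2 + X * (2 * P * \<bar>p1 - p2\<bar>))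
        + \<bar>\<gamma>\<bar> * (\<bar>r1 - r2\<bar> * Bm + X * (LB * \<bar>r1 - r2\<bar>))"
    using cube quadratic forcing by linarith
  also have "\<dots> = (2 + 6 * X^2 + P^2 + \<bar>\<gamma>\<bar> * (Bm + X * LB)) * \<bar>r1 - r2\<bar> + X * (2 * P) * \<bar>p1 - p2\<bar>"
    by (simp add: algebra_simps)
  finally show ?thesis .
qed

section \<open>The hole orbit and the bracket\<close>

lemma primitive_linear_bounds:
  fixes r s :: "real \<Rightarrow> real"
  assumes u: "0 \<le> u" and cont: "continuous_on {0..u} r" and r0: "r 0 = 0"
    and der: "\<And>x. x \<in> {0<..<u} \<Longrightarrow> (r has_real_derivative s x) (at x)"
    and bounds: "\<And>v. v \<in> {0..u} \<Longrightarrow> a \<le> s v \<and> s v \<le> b"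
  shows "a * u \<le> r u \<and> r u \<le> b * u"
proof -
  have s: "(s has_integral r u) {0..u}"
    using fundamental_theorem_of_calculus_interior[OF u cont] der r0
    by (simp add: has_real_derivative_iff_has_vector_derivative)
  have "integral {0..u} (\<lambda>v. a) \<le> integral {0..u} s" "integral {0..u} s \<le> integral {0..u} (\<lambda>v. b)"
    using bounds s by (intro integral_le; auto simp: has_integral_integrable)+
  moreover have "integral {0..u} s = r u"
    using s by (rule integral_unique)
  ultimately show ?thesis using u by (simp add: mult.commute)
qed

lemma hole_energy_derivative_le:
  fixes r \<tau> s \<sigma> q c R :: real
  assumes \<sigma>: "\<bar>\<sigma> - (1 - \<tau>^2)\<bar> \<le> \<bar>s - (1 - \<tau>^2)\<bar>" and q: "\<bar>q\<bar> \<le> c"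
    and r: "\<bar>r\<bar> \<le> R" and c: "0 \<le> c" and \<tau>: "\<bar>\<tau>\<bar> \<le> R"
  shows "2 * (r - \<tau>) * (\<sigma> - (1 - \<tau>^2))
      + 2 * (s - (1 - \<tau>^2)) * ((- 2 * r * (1 - r^2) + q) - (- 2 * \<tau> * (1 - \<tau>^2)))
    \<le> (4 + 6 * R^2) * ((r - \<tau>)^2 + (s - (1 - \<tau>^2))^2) + c^2"
proof -
  define a where "a = r - \<tau>"
  define b where "b = s - (1 - \<tau>^2)"
  define d where "d = r^3 - \<tau>^3"
  have cube: "\<bar>d\<bar> \<le> 3 * R^2 * \<bar>a\<bar>"
    unfolding a_def d_def by (rule abs_cube_diff_le[OF r \<tau>])
  have "(- 2 * r * (1 - r^2) + q) - (- 2 * \<tau> * (1 - \<tau>^2)) = - 2 * a + 2 * d + q"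
    unfolding a_def d_def by (simp add: algebra_simps power2_eq_square power3_eq_cube)
  then have "\<bar>(- 2 * r * (1 - r^2) + q) - (- 2 * \<tau> * (1 - \<tau>^2))\<bar> \<le> 2 * \<bar>a\<bar> + 2 * \<bar>d\<bar> + \<bar>q\<bar>"
    by arith
  also have "\<dots> \<le> 2 * \<bar>a\<bar> + 2 * (3 * R^2 * \<bar>a\<bar>) + c"
    using cube q by (intro add_mono mult_left_mono) auto
  finally have force: "\<bar>(- 2 * r * (1 - r^2) + q) - (- 2 * \<tau> * (1 - \<tau>^2))\<bar> \<le> (2 + 6 * R^2) * \<bar>a\<bar> + c"
    by (simp add: algebra_simps)
  have "a * (\<sigma> - (1 - \<tau>^2)) \<le> \<bar>a\<bar> * \<bar>b\<bar>"
    using \<sigma> unfolding b_def by (rule mult_le_abs_mult_bound)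
  moreover have "b * ((- 2 * r * (1 - r^2) + q) - (- 2 * \<tau> * (1 - \<tau>^2))) \<le> \<bar>b\<bar> * ((2 + 6 * R^2) * \<bar>a\<bar> + c)"
    using force by (rule mult_le_abs_mult_bound)
  ultimately have "2 * a * (\<sigma> - (1 - \<tau>^2)) + 2 * b * ((- 2 * r * (1 - r^2) + q) - (- 2 * \<tau> * (1 - \<tau>^2)))
      \<le> (3 + 6 * R^2) * (2 * \<bar>a\<bar> * \<bar>b\<bar>) + 2 * \<bar>b\<bar> * c"
    by (simp add: algebra_simps)
  also have "\<dots> \<le> (3 + 6 * R^2) * (a^2 + b^2) + (b^2 + c^2)"
    using sum_squares_bound[of "\<bar>a\<bar>" "\<bar>b\<bar>"] sum_squares_bound[of "\<bar>b\<bar>" c] c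
    by (intro add_mono mult_left_mono) auto
  also have "\<dots> \<le> (4 + 6 * R^2) * (a^2 + b^2) + c^2"
    by (simp add: algebra_simps)
  finally show ?thesis unfolding a_def b_def .
qed

text \<open>(tanh, 1 - tanh^2) is the hole orbit of r'' = -2 r (1 - r^2). The derivative of r only needs
  to be as close to 1 - tanh^2 as s is, so that the clamped system below is covered as well.\<close>
lemma tanh_orbit_gronwall:
  fixes r s \<sigma> q :: "real \<Rightarrow> real"
  assumes t: "0 \<le> t" and cont_r: "continuous_on {0..t} r" and cont_s: "continuous_on {0..t} s"
    and r0: "r 0 = 0" and s0: "s 0 = s0"
    and der_r: "\<And>x. x \<in> {0<..<t} \<Longrightarrow> (r has_real_derivative \<sigma> x) (at x)"
    and der_s: "\<And>x. x \<in> {0<..<t} \<Longrightarrow> (s has_real_derivative - 2 * r x * (1 - r x ^ 2) + q x) (at x)"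
    and \<sigma>: "\<And>x. x \<in> {0<..<t} \<Longrightarrow> \<bar>\<sigma> x - (1 - tanh x ^ 2)\<bar> \<le> \<bar>s x - (1 - tanh x ^ 2)\<bar>"
    and q: "\<And>x. x \<in> {0<..<t} \<Longrightarrow> \<bar>q x\<bar> \<le> c"
    and R: "\<And>x. x \<in> {0<..<t} \<Longrightarrow> \<bar>r x\<bar> \<le> R" "1 \<le> R" and c: "0 \<le> c"
  shows "(r t - tanh t)^2 + (s t - (1 - tanh t ^ 2))^2 \<le> ((s0 - 1)^2 + c^2 * t) * exp ((4 + 6 * R^2) * t)"
proof -
  define E where "E u = (r u - tanh u)^2 + (s u - (1 - tanh u ^ 2))^2" for u
  define E' where "E' u = 2 * (r u - tanh u) * (\<sigma> u - (1 - tanh u ^ 2))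
     + 2 * (s u - (1 - tanh u ^ 2)) * ((- 2 * r u * (1 - r u ^ 2) + q u) - (- 2 * tanh u * (1 - tanh u ^ 2)))"
    for u
  have "E t \<le> (E 0 + c^2 * t) * exp ((4 + 6 * R^2) * t)"
  proof (rule gronwall_affine[OF t, where f' = E'])
    show "continuous_on {0..t} E"
      unfolding E_def by (intro continuous_intros cont_r cont_s) auto
  next
    fix x assume x: "x \<in> {0<..<t}"
    have sech_sq: "((\<lambda>x. 1 - tanh x ^ 2) has_real_derivative - 2 * tanh x * (1 - tanh x ^ 2)) (at x)"
      by (auto intro!: derivative_eq_intros simp: power2_eq_square algebra_simps)
    show "(E has_real_derivative E' x) (at x)"
      unfolding E_def E'_def
      by (rule derivative_eq_intros der_r[OF x] der_s[OF x] sech_sq refl | simp)+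
        (simp add: algebra_simps power2_eq_square)
  next
    fix x assume x: "x \<in> {0<..<t}"
    have "\<bar>tanh x\<bar> \<le> R" using R(2) tanh_real_bounds[of x] by auto
    with \<sigma>[OF x] q[OF x] R(1)[OF x] c show "E' x \<le> (4 + 6 * R^2) * E x + c^2"
      unfolding E'_def E_def by (rule hole_energy_derivative_le)
  qed (use c in auto)
  then show ?thesis unfolding E_def using r0 s0 by simp
qed

lemma continuous_on_bracket [continuous_intros]:
  "continuous_on S f \<Longrightarrow> continuous_on S (\<lambda>x. bracket d1 d3 d4 sst eps sig (f x))"
  unfolding bracket_def by (intro continuous_intros)

lemma bracket_eq_unperturbed_plus:
  "bracket d1 d3 d4 sst eps sig x = bracket d1 d3 d4 0 0 0 x + (eps^2 * sst + sig)"
  unfolding bracket_def by simp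

lemma abs_bracket_le:
  assumes "\<bar>x\<bar> \<le> X"
  shows "\<bar>bracket d1 d3 d4 sst eps sig x\<bar>
    \<le> \<bar>d1 + d3\<bar> * (1 + X^2) + \<bar>d4\<bar> * (1 + X^4) + \<bar>eps^2 * sst + sig\<bar>"
proof -
  have "x^2 \<le> X^2" "x^4 \<le> X^4"
    using power_mono[OF assms abs_ge_zero, of 2] power_mono[OF assms abs_ge_zero, of 4] by simp_all
  moreover have "0 \<le> x^4" "0 \<le> X^4" "0 \<le> x^2"
    by (auto intro: zero_le_even_power)
  ultimately have "\<bar>1 - x^2\<bar> \<le> 1 + X^2" "\<bar>1 - x^4\<bar> \<le> 1 + X^4"
    unfolding abs_le_iff by linarith+
  note bounds = this
  have "\<bar>bracket d1 d3 d4 sst eps sig x\<bar>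
      = \<bar>(d1 + d3) * (1 - x^2) + d4 * (1 - x^4) + (eps^2 * sst + sig)\<bar>"
    unfolding bracket_def by (simp add: add.assoc)
  also have "\<dots> \<le> \<bar>(d1 + d3) * (1 - x^2) + d4 * (1 - x^4)\<bar> + \<bar>eps^2 * sst + sig\<bar>"
    by (rule abs_triangle_ineq)
  also have "\<dots> \<le> \<bar>d1 + d3\<bar> * \<bar>1 - x^2\<bar> + \<bar>d4\<bar> * \<bar>1 - x^4\<bar> + \<bar>eps^2 * sst + sig\<bar>"
    using abs_triangle_ineq[of "(d1 + d3) * (1 - x^2)" "d4 * (1 - x^4)"] by (simp add: abs_mult)
  also have "\<dots> \<le> \<bar>d1 + d3\<bar> * (1 + X^2) + \<bar>d4\<bar> * (1 + X^4) + \<bar>eps^2 * sst + sig\<bar>"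
    using bounds by (intro add_mono mult_left_mono) auto
  finally show ?thesis .
qed

lemma abs_bracket_diff_le:
  assumes x: "\<bar>x\<bar> \<le> X" and y: "\<bar>y\<bar> \<le> X"
  shows "\<bar>bracket d1 d3 d4 sst eps sig x - bracket d1 d3 d4 sst eps sig y\<bar>
    \<le> (\<bar>d1 + d3\<bar> * (2 * X) + \<bar>d4\<bar> * (4 * X^3)) * \<bar>x - y\<bar>"
proof -
  have sq: "\<bar>x^2 - y^2\<bar> \<le> 2 * X * \<bar>x - y\<bar>"
    by (rule abs_square_diff_le[OF x y])
  have "\<bar>x^2\<bar> \<le> X^2" "\<bar>y^2\<bar> \<le> X^2"
    using power_mono[OF x abs_ge_zero, of 2] power_mono[OF y abs_ge_zero, of 2] by (simp_all add: power_abs)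
  then have "\<bar>(x^2)^2 - (y^2)^2\<bar> \<le> 2 * X^2 * \<bar>x^2 - y^2\<bar>"
    by (rule abs_square_diff_le)
  also have "\<dots> \<le> 2 * X^2 * (2 * X * \<bar>x - y\<bar>)"
    using sq by (intro mult_left_mono) auto
  finally have "\<bar>x^4 - y^4\<bar> \<le> 4 * X^3 * \<bar>x - y\<bar>"
    by (simp add: power2_eq_square power3_eq_cube power4_eq_xxxx mult.assoc)
  then have "\<bar>d1 + d3\<bar> * \<bar>x^2 - y^2\<bar> + \<bar>d4\<bar> * \<bar>x^4 - y^4\<bar>
      \<le> \<bar>d1 + d3\<bar> * (2 * X * \<bar>x - y\<bar>) + \<bar>d4\<bar> * (4 * X^3 * \<bar>x - y\<bar>)"
    using sq by (intro add_mono mult_left_mono) auto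
  moreover have "\<bar>bracket d1 d3 d4 sst eps sig x - bracket d1 d3 d4 sst eps sig y\<bar>
      = \<bar>(d1 + d3) * (y^2 - x^2) + d4 * (y^4 - x^4)\<bar>"
    unfolding bracket_def by (simp add: algebra_simps)
  moreover have "\<bar>(d1 + d3) * (y^2 - x^2) + d4 * (y^4 - x^4)\<bar>
      \<le> \<bar>d1 + d3\<bar> * \<bar>x^2 - y^2\<bar> + \<bar>d4\<bar> * \<bar>x^4 - y^4\<bar>"
    using abs_triangle_ineq[of "(d1 + d3) * (y^2 - x^2)" "d4 * (y^4 - x^4)"]
    by (simp add: abs_mult abs_minus_commute)
  ultimately show ?thesis by (simp add: algebra_simps)
qed

lemma lipschitz_on_bracket:
  assumes "0 \<le> X"
  shows "(\<bar>d1 + d3\<bar> * (2 * X) + \<bar>d4\<bar> * (4 * X^3))-lipschitz_on {-X..X} (bracket d1 d3 d4 sst eps sig)"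
proof (rule lipschitz_onI)
  fix x y assume "x \<in> {-X..X}" "y \<in> {-X..X}"
  then show "dist (bracket d1 d3 d4 sst eps sig x) (bracket d1 d3 d4 sst eps sig y)
      \<le> (\<bar>d1 + d3\<bar> * (2 * X) + \<bar>d4\<bar> * (4 * X^3)) * dist x y"
    unfolding dist_real_def by (intro abs_bracket_diff_le) auto
qed (use assms in simp)

lemma integral_tanh_sq_bracket:
  assumes "0 \<le> T"
  shows "integral {0..T} (\<lambda>x. tanh x ^ 2 * bracket d1 d3 d4 0 0 0 (tanh x))
    = (d1 + d3) * tanh T ^ 3 / 3 + d4 * (tanh T ^ 3 / 3 + tanh T ^ 5 / 5)"
proof -
  define F where "F x = (d1 + d3) * tanh x ^ 3 / 3 + d4 * (tanh x ^ 3 / 3 + tanh x ^ 5 / 5)" for x :: real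
  have "(F has_real_derivative tanh x ^ 2 * bracket d1 d3 d4 0 0 0 (tanh x)) (at x)" for x
  proof -
    have "(F has_real_derivative (d1 + d3) * (3 * tanh x ^ 2 * (1 - tanh x ^ 2)) / 3
        + d4 * (3 * tanh x ^ 2 * (1 - tanh x ^ 2) / 3 + 5 * tanh x ^ 4 * (1 - tanh x ^ 2) / 5)) (at x)"
      unfolding F_def by (auto intro!: derivative_eq_intros simp: power2_eq_square power3_eq_cube)
    moreover have "(d1 + d3) * (3 * tanh x ^ 2 * (1 - tanh x ^ 2)) / 3
        + d4 * (3 * tanh x ^ 2 * (1 - tanh x ^ 2) / 3 + 5 * tanh x ^ 4 * (1 - tanh x ^ 2) / 5)
        = tanh x ^ 2 * bracket d1 d3 d4 0 0 0 (tanh x)"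
      unfolding bracket_def by (simp add: field_simps power2_eq_square power4_eq_xxxx)
    ultimately show ?thesis by simp
  qed
  then have "(F has_vector_derivative tanh x ^ 2 * bracket d1 d3 d4 0 0 0 (tanh x)) (at x within {0..T})"
    for x
    unfolding has_real_derivative_iff_has_vector_derivative[symmetric] by (rule DERIV_subset) auto
  then have "((\<lambda>x. tanh x ^ 2 * bracket d1 d3 d4 0 0 0 (tanh x)) has_integral (F T - F 0)) {0..T}"
    using assms by (intro fundamental_theorem_of_calculus)
  then show ?thesis unfolding F_def by (simp add: integral_unique)
qed

lemma hole_sys_solD:
  assumes "hole_sys_sol d1 d3 d4 sst eps sig {0<..T} r s psi" and x: "x \<in> {0<..<T}"
  shows "r x \<noteq> 0" "(r has_real_derivative s x) (at x)"
    "(s has_real_derivative - 2 * r x * (1 - (r x)^2) + r x * (psi x)^2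
       + 2 * eps^2 * d1 * r x * bracket d1 d3 d4 sst eps sig (r x)) (at x)"
    "(psi has_real_derivative - 2 * (s x / r x) * psi x + 2 * eps * bracket d1 d3 d4 sst eps sig (r x)) (at x)"
proof -
  have "x \<in> {0<..T}" using x by auto
  then have "r x \<noteq> 0 \<and> (r has_real_derivative s x) (at x within {0<..T}) \<and>
    (s has_real_derivative - 2 * r x * (1 - (r x)^2) + r x * (psi x)^2
       + 2 * eps^2 * d1 * r x * bracket d1 d3 d4 sst eps sig (r x)) (at x within {0<..T}) \<and>
    (psi has_real_derivative - 2 * (s x / r x) * psi x + 2 * eps * bracket d1 d3 d4 sst eps sig (r x))
       (at x within {0<..T})"
    using assms(1) unfolding hole_sys_sol_def by blast
  moreover have "at x within {0<..T} = at x"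
    by (rule at_within_open_subset[of x "{0<..<T}"]) (use x in auto)
  ultimately show "r x \<noteq> 0" "(r has_real_derivative s x) (at x)"
    "(s has_real_derivative - 2 * r x * (1 - (r x)^2) + r x * (psi x)^2
       + 2 * eps^2 * d1 * r x * bracket d1 d3 d4 sst eps sig (r x)) (at x)"
    "(psi has_real_derivative - 2 * (s x / r x) * psi x + 2 * eps * bracket d1 d3 d4 sst eps sig (r x)) (at x)"
    by auto
qed

section \<open>The wavenumber as a moment of r\<close>

definition moment :: "(real \<Rightarrow> real) \<Rightarrow> (real \<Rightarrow> real) \<Rightarrow> real \<Rightarrow> real" where
  "moment \<beta> r t = integral {0..t} (\<lambda>u. (r u)^2 * \<beta> (r u))"

text \<open>Integrating (r^2 psi)' = 2 eps r^2 \<beta>(r) expresses psi through r. At t = 0, where r vanishes,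
  division by zero yields the initial value psi 0 = 0.\<close>
definition wavenumber :: "real \<Rightarrow> (real \<Rightarrow> real) \<Rightarrow> (real \<Rightarrow> real) \<Rightarrow> real \<Rightarrow> real" where
  "wavenumber eps \<beta> r t = 2 * eps * moment \<beta> r t / (r t)^2"

lemma moment_0 [simp]: "moment \<beta> r 0 = 0"
  unfolding moment_def by simp

lemma continuous_on_moment_integrand:
  fixes r \<beta> :: "real \<Rightarrow> real"
  assumes "continuous_on S r" "continuous_on UNIV \<beta>"
  shows "continuous_on S (\<lambda>u. (r u)^2 * \<beta> (r u))"
proof -
  have "continuous_on S (\<lambda>u. \<beta> (r u))"
    using continuous_on_compose2[OF assms(2,1)] by simp
  with assms(1) show ?thesis by (intro continuous_on_mult continuous_on_power)
qed

lemma continuous_on_moment: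
  "continuous_on {0..T} r \<Longrightarrow> continuous_on UNIV \<beta> \<Longrightarrow> continuous_on {0..T} (moment \<beta> r)"
  unfolding moment_def
  by (intro indefinite_integral_continuous_1 integrable_continuous_real continuous_on_moment_integrand)

lemma moment_has_derivative:
  assumes "continuous_on {0..T} r" "continuous_on UNIV \<beta>" "x \<in> {0..T}"
  shows "(moment \<beta> r has_real_derivative (r x)^2 * \<beta> (r x)) (at x within {0..T})"
  unfolding moment_def has_real_derivative_iff_has_vector_derivative
  by (intro integral_has_vector_derivative continuous_on_moment_integrand assms)

lemma abs_moment_le:
  assumes t: "0 \<le> t" and r: "continuous_on {0..t} r" and \<beta>: "continuous_on UNIV \<beta>" and M: "0 \<le> M"
    and bounds: "\<And>u. u \<in> {0..t} \<Longrightarrow> \<bar>r u\<bar> \<le> M * u \<and> \<bar>\<beta> (r u)\<bar> \<le> Bm"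
  shows "\<bar>moment \<beta> r t\<bar> \<le> (M * t)^2 * Bm * t"
proof -
  have "norm ((r u)^2 * \<beta> (r u)) \<le> (M * t)^2 * Bm" if u: "u \<in> {0..t}" for u
  proof -
    have "\<bar>r u\<bar> \<le> M * t"
      using bounds[OF u] u M by (meson atLeastAtMost_iff mult_left_mono order_trans)
    then have "\<bar>r u\<bar>^2 \<le> (M * t)^2" by (intro power_mono) auto
    then show ?thesis
      using bounds[OF u] by (simp add: abs_mult mult_mono)
  qed
  then have "norm (moment \<beta> r t) \<le> (M * t)^2 * Bm * (t - 0)"
    unfolding moment_def using t by (intro integral_bound continuous_on_moment_integrand r \<beta>) auto
  then show ?thesis by simp
qed

lemma moment_diff_le:
  assumes t: "0 \<le> t" and r1: "continuous_on {0..t} r1" and r2: "continuous_on {0..t} r2"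
    and \<beta>: "continuous_on UNIV \<beta>" and lip: "Lq-lipschitz_on {-X..X} (\<lambda>x. x^2 * \<beta> x)"
    and bounds: "\<And>u. u \<in> {0..t} \<Longrightarrow> \<bar>r1 u\<bar> \<le> X \<and> \<bar>r2 u\<bar> \<le> X \<and> \<bar>r1 u - r2 u\<bar> \<le> D * u"
    and D: "0 \<le> D"
  shows "\<bar>moment \<beta> r1 t - moment \<beta> r2 t\<bar> \<le> Lq * D * t * t"
proof -
  let ?f = "\<lambda>u. (r1 u)^2 * \<beta> (r1 u) - (r2 u)^2 * \<beta> (r2 u)"
  have "norm (?f u) \<le> Lq * D * t" if u: "u \<in> {0..t}" for u
  proof -
    have "r1 u \<in> {-X..X}" "r2 u \<in> {-X..X}"
      using bounds[OF u] by (auto simp: abs_le_iff)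
    then have "\<bar>?f u\<bar> \<le> Lq * \<bar>r1 u - r2 u\<bar>"
      using lipschitz_onD[OF lip] by (simp add: dist_real_def)
    also have "\<dots> \<le> Lq * (D * t)"
      using bounds[OF u] mult_left_mono[of u t D] u D lipschitz_on_nonneg[OF lip]
      by (intro mult_left_mono) auto
    finally show ?thesis by simp
  qed
  moreover have cont: "continuous_on {0..t} ?f"
    by (intro continuous_on_diff continuous_on_moment_integrand r1 r2 \<beta>)
  ultimately have "norm (integral {0..t} ?f) \<le> Lq * D * t * (t - 0)"
    using t by (intro integral_bound) auto
  moreover have "moment \<beta> r1 t - moment \<beta> r2 t = integral {0..t} ?f"
    unfolding moment_def
    by (intro integral_diff[symmetric] integrable_continuous_real continuous_on_moment_integrand r1 r2 \<beta>)
  ultimately show ?thesis by simp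
qed

lemma abs_wavenumber_le:
  assumes m: "0 < m" and t: "0 \<le> t" and r: "m * t \<le> r t"
    and moment: "\<bar>moment \<beta> r t\<bar> \<le> (M * t)^2 * Bm * t" and Bm: "0 \<le> Bm"
  shows "\<bar>wavenumber eps \<beta> r t\<bar> \<le> \<bar>eps\<bar> * (2 * Bm * M^2 / m^2) * t"
proof (cases "t = 0")
  case True
  then show ?thesis using moment by (simp add: wavenumber_def)
next
  case False
  then have mt: "0 < m * t" using m t by simp
  then have r2: "(m * t)^2 \<le> (r t)^2" using r by (intro power_mono) auto
  have "\<bar>wavenumber eps \<beta> r t\<bar> = 2 * \<bar>eps\<bar> * \<bar>moment \<beta> r t\<bar> / (r t)^2"
    unfolding wavenumber_def by (simp add: abs_mult)
  also have "\<dots> \<le> 2 * \<bar>eps\<bar> * ((M * t)^2 * Bm * t) / (r t)^2"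
    using moment by (intro divide_right_mono mult_left_mono) auto
  also have "\<dots> \<le> 2 * \<bar>eps\<bar> * ((M * t)^2 * Bm * t) / (m * t)^2"
    using r2 mt Bm t by (intro divide_left_mono mult_nonneg_nonneg mult_pos_pos) auto
  also have "\<dots> = \<bar>eps\<bar> * (2 * Bm * M^2 / m^2) * t"
    using mt by (simp add: field_simps power2_eq_square)
  finally show ?thesis .
qed

lemma wavenumber_diff_le:
  assumes m: "0 < m" "m \<le> M" and t: "0 \<le> t" "t \<le> T" and D: "0 \<le> D" and Bm: "0 \<le> Bm" and Lq: "0 \<le> Lq"
    and r1: "m * t \<le> r1 t" "r1 t \<le> M * t" and r2: "m * t \<le> r2 t" "r2 t \<le> M * t" and r12: "\<bar>r1 t - r2 t\<bar> \<le> D * t"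
    and moment12: "\<bar>moment \<beta> r1 t - moment \<beta> r2 t\<bar> \<le> Lq * D * t * t"
    and moment2: "\<bar>moment \<beta> r2 t\<bar> \<le> (M * t)^2 * Bm * t"
  shows "\<bar>wavenumber eps \<beta> r1 t - wavenumber eps \<beta> r2 t\<bar>
    \<le> \<bar>eps\<bar> * (2 * (Lq / m^2 + 2 * Bm * M^3 * T / m^4)) * D"
proof (cases "t = 0")
  case True
  then show ?thesis using D Bm m Lq t by (simp add: wavenumber_def)
next
  case False
  then have mt: "0 < m * t" using m t by simp
  define I1 where "I1 = moment \<beta> r1 t"
  define I2 where "I2 = moment \<beta> r2 t"
  have pos: "0 < r1 t" "0 < r2 t" using r1 r2 mt by auto
  have sq: "(m * t)^2 \<le> (r1 t)^2" "(m * t)^2 \<le> (r2 t)^2"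
    using r1 r2 mt by (auto intro!: power_mono)
  have "\<bar>(I1 - I2) / (r1 t)^2\<bar> = \<bar>I1 - I2\<bar> / (r1 t)^2" by simp
  also have "\<dots> \<le> (Lq * D * t * t) / (r1 t)^2"
    using moment12 unfolding I1_def I2_def by (intro divide_right_mono) auto
  also have "\<dots> \<le> (Lq * D * t * t) / (m * t)^2"
    using sq mt Lq D t by (intro divide_left_mono mult_nonneg_nonneg mult_pos_pos) auto
  also have "\<dots> = Lq * D / m^2"
    using m False by (simp add: field_simps power2_eq_square)
  finally have first: "\<bar>(I1 - I2) / (r1 t)^2\<bar> \<le> Lq * D / m^2" .
  have "\<bar>I2 * ((r2 t - r1 t) * (r2 t + r1 t))\<bar> \<le> ((M * t)^2 * Bm * t) * ((D * t) * (2 * (M * t)))"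
    unfolding abs_mult I2_def using moment2 r12 r1 r2 mt
    by (intro mult_mono) (auto simp: abs_minus_commute)
  moreover have "(m * t)^2 * (m * t)^2 \<le> (r1 t)^2 * (r2 t)^2"
    using sq by (intro mult_mono) auto
  moreover have "0 < (m * t)^2 * (m * t)^2"
    using m False by simp
  ultimately have "\<bar>I2 * ((r2 t - r1 t) * (r2 t + r1 t))\<bar> / ((r1 t)^2 * (r2 t)^2)
      \<le> ((M * t)^2 * Bm * t) * ((D * t) * (2 * (M * t))) / ((m * t)^2 * (m * t)^2)"
    using Bm D t m by (intro frac_le mult_nonneg_nonneg) auto
  also have "\<dots> = 2 * Bm * M^3 * t / m^4 * D"
    using m False by (simp add: field_simps power2_eq_square power3_eq_cube power4_eq_xxxx)
  also have "\<dots> \<le> 2 * Bm * M^3 * T / m^4 * D"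
    using t Bm D m by (intro mult_right_mono divide_right_mono mult_left_mono) auto
  finally have second: "\<bar>I2 * ((r2 t - r1 t) * (r2 t + r1 t)) / ((r1 t)^2 * (r2 t)^2)\<bar>
      \<le> 2 * Bm * M^3 * T / m^4 * D"
    by simp
  have "wavenumber eps \<beta> r1 t - wavenumber eps \<beta> r2 t
      = 2 * eps * ((I1 - I2) / (r1 t)^2 + I2 * ((r2 t - r1 t) * (r2 t + r1 t)) / ((r1 t)^2 * (r2 t)^2))"
    unfolding wavenumber_def I1_def I2_def using pos by (simp add: field_simps power2_eq_square)
  also have "\<bar>\<dots>\<bar> = 2 * \<bar>eps\<bar>
      * \<bar>(I1 - I2) / (r1 t)^2 + I2 * ((r2 t - r1 t) * (r2 t + r1 t)) / ((r1 t)^2 * (r2 t)^2)\<bar>"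
    by (simp add: abs_mult)
  also have "\<dots> \<le> 2 * \<bar>eps\<bar> * (Lq * D / m^2 + 2 * Bm * M^3 * T / m^4 * D)"
    using first second abs_triangle_ineq[of "(I1 - I2) / (r1 t)^2"
        "I2 * ((r2 t - r1 t) * (r2 t + r1 t)) / ((r1 t)^2 * (r2 t)^2)"]
    by (intro mult_left_mono) auto
  finally show ?thesis by (simp add: algebra_simps)
qed

lemma continuous_on_wavenumber:
  assumes r: "continuous_on {0..T} r" and \<beta>: "continuous_on UNIV \<beta>"
    and nonzero: "\<And>t. t \<in> {0<..T} \<Longrightarrow> r t \<noteq> 0"
    and bound: "\<And>t. t \<in> {0..T} \<Longrightarrow> \<bar>wavenumber eps \<beta> r t\<bar> \<le> K * t"
  shows "continuous_on {0..T} (wavenumber eps \<beta> r)"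
  unfolding continuous_on_eq_continuous_within
proof
  fix x assume x: "x \<in> {0..T}"
  show "continuous (at x within {0..T}) (wavenumber eps \<beta> r)"
  proof (cases "x = 0")
    case True
    show ?thesis unfolding continuous_within_eps_delta
    proof (intro allI impI)
      fix e :: real assume e: "0 < e"
      show "\<exists>d>0. \<forall>y\<in>{0..T}. dist y x < d \<longrightarrow> dist (wavenumber eps \<beta> r y) (wavenumber eps \<beta> r x) < e"
      proof (intro exI[of _ "e / (\<bar>K\<bar> + 1)"] conjI ballI impI)
        fix y assume y: "y \<in> {0..T}" and "dist y x < e / (\<bar>K\<bar> + 1)"
        then have "(\<bar>K\<bar> + 1) * y < e" using True by (simp add: dist_real_def field_simps)
        moreover have "\<bar>wavenumber eps \<beta> r y\<bar> \<le> (\<bar>K\<bar> + 1) * y"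
          using bound[OF y] y by (smt (verit) atLeastAtMost_iff abs_ge_self mult_right_mono)
        moreover have "wavenumber eps \<beta> r x = 0" using True by (simp add: wavenumber_def)
        ultimately show "dist (wavenumber eps \<beta> r y) (wavenumber eps \<beta> r x) < e"
          by (simp add: dist_real_def)
      qed (use e in simp)
    qed
  next
    case False
    then have "r x \<noteq> 0" using nonzero x by simp
    then show ?thesis
      unfolding wavenumber_def[abs_def]
      using x continuous_on_moment[OF r \<beta>] r
      by (intro continuous_intros) (auto simp: continuous_on_eq_continuous_within)
  qed
qed

lemma orbit_moment_identity:
  assumes orbit: "orbit_from_Sigma d1 d3 d4 sst eps sig s0 T r s psi" and u: "u \<in> {0..T}"
  shows "(r u)^2 * psi u = 2 * eps * moment (bracket d1 d3 d4 sst eps sig) r u"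
proof -
  have r: "continuous_on {0..T} r" and psi: "continuous_on {0..T} psi" and r0: "r 0 = 0"
    and sol: "hole_sys_sol d1 d3 d4 sst eps sig {0<..T} r s psi"
    using orbit unfolding orbit_from_Sigma_def by auto
  have "((\<lambda>x. 2 * eps * ((r x)^2 * bracket d1 d3 d4 sst eps sig (r x))) has_integral
      (r u)^2 * psi u - (r 0)^2 * psi 0) {0..u}"
  proof (rule fundamental_theorem_of_calculus_interior[
        where f = "\<lambda>x. (r x)^2 * psi x", unfolded has_real_derivative_iff_has_vector_derivative[symmetric]])
    show "0 \<le> u" using u by simp
    show "continuous_on {0..u} (\<lambda>x. (r x)^2 * psi x)"
      using u by (intro continuous_intros continuous_on_subset[OF r] continuous_on_subset[OF psi]) auto
  next
    fix x assume x: "x \<in> {0<..<u}"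
    then have "x \<in> {0<..<T}" using u by auto
    note sys = hole_sys_solD[OF sol this]
    have "((\<lambda>x. (r x)^2 * psi x) has_real_derivative 2 * r x * s x * psi x
        + (r x)^2 * (- 2 * (s x / r x) * psi x + 2 * eps * bracket d1 d3 d4 sst eps sig (r x))) (at x)"
      by (rule derivative_eq_intros sys(2) sys(4) refl | simp)+
    moreover have "2 * r x * s x * psi x
        + (r x)^2 * (- 2 * (s x / r x) * psi x + 2 * eps * bracket d1 d3 d4 sst eps sig (r x))
        = 2 * eps * ((r x)^2 * bracket d1 d3 d4 sst eps sig (r x))"
      using sys(1) by (simp add: field_simps power2_eq_square)
    ultimately show "((\<lambda>x. (r x)^2 * psi x) has_real_derivative
        2 * eps * ((r x)^2 * bracket d1 d3 d4 sst eps sig (r x))) (at x)"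
      by simp
  qed
  then have "((\<lambda>x. 2 * eps * ((r x)^2 * bracket d1 d3 d4 sst eps sig (r x))) has_integral
      (r u)^2 * psi u) {0..u}"
    using r0 by simp
  then have "(r u)^2 * psi u = integral {0..u} (\<lambda>x. 2 * eps * ((r x)^2 * bracket d1 d3 d4 sst eps sig (r x)))"
    by (simp only: integral_unique)
  also have "\<dots> = 2 * eps * moment (bracket d1 d3 d4 sst eps sig) r u"
    unfolding moment_def by (rule integral_mult_right)
  finally show ?thesis .
qed

lemma orbit_psi_eq_wavenumber:
  assumes orbit: "orbit_from_Sigma d1 d3 d4 sst eps sig s0 T r s psi" and u: "u \<in> {0..T}"
  shows "psi u = wavenumber eps (bracket d1 d3 d4 sst eps sig) r u"
proof (cases "u = 0")
  case True
  then show ?thesis using orbit by (simp add: orbit_from_Sigma_def wavenumber_def)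
next
  case False
  then have "r u \<noteq> 0"
    using orbit u unfolding orbit_from_Sigma_def hole_sys_sol_def by auto
  then show ?thesis
    using orbit_moment_identity[OF orbit u] by (simp add: wavenumber_def field_simps)
qed

lemma abs_hole_forcing_le:
  fixes r p \<gamma> :: real
  assumes "\<bar>r\<bar> \<le> X" "\<bar>p\<bar> \<le> P" "\<bar>\<beta> r\<bar> \<le> Bm"
  shows "\<bar>r * p^2 + \<gamma> * r * \<beta> r\<bar> \<le> X * P^2 + \<bar>\<gamma>\<bar> * X * Bm"
proof -
  have "\<bar>p\<bar>^2 \<le> P^2" using assms(2) by (intro power_mono) auto
  then have "\<bar>r\<bar> * \<bar>p\<bar>^2 \<le> X * P^2"
    using assms(1) by (intro mult_mono) auto
  moreover have "\<bar>\<gamma>\<bar> * (\<bar>r\<bar> * \<bar>\<beta> r\<bar>) \<le> \<bar>\<gamma>\<bar> * (X * Bm)"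
    using assms(1,3) by (intro mult_left_mono mult_mono) auto
  moreover have "\<bar>r * p^2 + \<gamma> * r * \<beta> r\<bar> \<le> \<bar>r\<bar> * \<bar>p\<bar>^2 + \<bar>\<gamma>\<bar> * (\<bar>r\<bar> * \<bar>\<beta> r\<bar>)"
    using abs_triangle_ineq[of "r * p^2" "\<gamma> * r * \<beta> r"] by (simp add: abs_mult mult.assoc)
  ultimately show ?thesis by (simp add: mult.assoc)
qed

lemma near_sech_sq_bounds:
  fixes s :: real
  assumes "\<bar>s - (1 - tanh t ^ 2)\<bar> \<le> \<rho>" "\<rho> < m" "2 * m \<le> 1 - tanh T ^ 2" "\<rho> < 1"
    and "0 \<le> t" "t \<le> T"
  shows "m < s \<and> s < 2"
proof -
  have "tanh t ^ 2 \<le> tanh T ^ 2" using assms(5,6) by (intro power_mono) auto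
  moreover have "0 \<le> tanh t ^ 2" by simp
  ultimately show ?thesis using assms(1-4) unfolding abs_le_iff by linarith
qed

section \<open>Existence through a clamped Volterra system\<close>

text \<open>In this system r is the integral of s clamped to [m, M], so that r t \<ge> m t keeps the
  psi-equation regular; along the solutions that are used, the clamp turns out to be inactive.\<close>
locale clamped_hole_system =
  fixes \<beta> :: "real \<Rightarrow> real" and m M T Bm LB :: real
  assumes continuous_\<beta>: "continuous_on UNIV \<beta>"
    and m_pos: "0 < m" and m_le_M: "m \<le> M" and T_pos: "0 < T"
    and bounded_\<beta>: "\<And>x. \<bar>x\<bar> \<le> M * T \<Longrightarrow> \<bar>\<beta> x\<bar> \<le> Bm"
    and lipschitz_\<beta>: "LB-lipschitz_on {-(M * T)..M * T} \<beta>"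
begin

definition amplitude :: "(real \<Rightarrow> real) \<Rightarrow> real \<Rightarrow> real" where
  "amplitude s t = integral {0..t} (\<lambda>u. clamp m M (s u))"

definition reduced_rhs :: "real \<Rightarrow> real \<Rightarrow> (real \<Rightarrow> real) \<Rightarrow> real \<Rightarrow> real" where
  "reduced_rhs eps \<gamma> s t = hole_rhs \<gamma> \<beta> (amplitude s t) (wavenumber eps \<beta> (amplitude s) t)"

lemma MT_pos: "0 < M * T"
  using m_pos m_le_M T_pos by simp

lemma Bm_nonneg: "0 \<le> Bm"
  using bounded_\<beta>[of 0] MT_pos by fastforce

lemma LB_nonneg: "0 \<le> LB"
  using lipschitz_\<beta> by (rule lipschitz_on_nonneg)

lemma amplitude_0 [simp]: "amplitude s 0 = 0"
  unfolding amplitude_def by simp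

lemma integrable_clamp:
  assumes "continuous_on {0..T} s" "t \<in> {0..T}"
  shows "(\<lambda>u. clamp m M (s u)) integrable_on {0..t}"
  using assms by (intro integrable_continuous_real continuous_on_clamp_real continuous_on_subset[OF assms(1)]) auto

lemma continuous_on_amplitude:
  assumes "continuous_on {0..T} s"
  shows "continuous_on {0..T} (amplitude s)"
  unfolding amplitude_def
  by (intro indefinite_integral_continuous_1 integrable_continuous_real continuous_on_clamp_real assms)

lemma amplitude_has_derivative:
  assumes "continuous_on {0..T} s" "x \<in> {0..T}"
  shows "(amplitude s has_real_derivative clamp m M (s x)) (at x within {0..T})"
  unfolding amplitude_def has_real_derivative_iff_has_vector_derivative
  by (intro integral_has_vector_derivative continuous_on_clamp_real assms)

lemma amplitude_bounds:
  assumes "continuous_on {0..T} s" "t \<in> {0..T}"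
  shows "m * t \<le> amplitude s t" "amplitude s t \<le> M * t" "\<bar>amplitude s t\<bar> \<le> M * T"
proof -
  have "integral {0..t} (\<lambda>u. m) \<le> amplitude s t" "amplitude s t \<le> integral {0..t} (\<lambda>u. M)"
    unfolding amplitude_def using clamp_real_bounds[OF m_le_M]
    by (intro integral_le integrable_clamp[OF assms] integrable_const_ivl; simp)+
  then show lower: "m * t \<le> amplitude s t" and upper: "amplitude s t \<le> M * t"
    using assms(2) by (simp_all add: mult.commute)
  have "0 \<le> m * t" "M * t \<le> M * T"
    using assms(2) m_pos m_le_M by (auto intro: mult_left_mono)
  then show "\<bar>amplitude s t\<bar> \<le> M * T"
    using lower upper by linarith
qed

lemma amplitude_diff_le:
  assumes s1: "continuous_on {0..T} s1" and s2: "continuous_on {0..T} s2" and t: "t \<in> {0..T}"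
    and D: "\<forall>v\<in>{0..t}. \<bar>s1 v - s2 v\<bar> \<le> D"
  shows "\<bar>amplitude s1 t - amplitude s2 t\<bar> \<le> D * t"
proof -
  have "amplitude s1 t - amplitude s2 t = integral {0..t} (\<lambda>u. clamp m M (s1 u) - clamp m M (s2 u))"
    unfolding amplitude_def by (intro integral_diff[symmetric] integrable_clamp s1 s2 t)
  moreover have "\<bar>clamp m M (s1 u) - clamp m M (s2 u)\<bar> \<le> D" if "u \<in> {0..t}" for u
    using order_trans[OF abs_clamp_real_diff_le] D that by blast
  then have "norm (integral {0..t} (\<lambda>u. clamp m M (s1 u) - clamp m M (s2 u))) \<le> D * (t - 0)"
    using t
    by (intro integral_bound continuous_on_diff continuous_on_clamp_real
        continuous_on_subset[OF s1] continuous_on_subset[OF s2]) auto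
  ultimately show ?thesis by simp
qed

lemma abs_moment_amplitude_le:
  assumes "continuous_on {0..T} s" "t \<in> {0..T}"
  shows "\<bar>moment \<beta> (amplitude s) t\<bar> \<le> (M * t)^2 * Bm * t"
proof (rule abs_moment_le)
  show "continuous_on {0..t} (amplitude s)"
    using assms by (intro continuous_on_subset[OF continuous_on_amplitude]) auto
  fix u assume "u \<in> {0..t}"
  then have u: "u \<in> {0..T}" using assms(2) by auto
  have "0 \<le> m * u" using m_pos u by simp
  then show "\<bar>amplitude s u\<bar> \<le> M * u \<and> \<bar>\<beta> (amplitude s u)\<bar> \<le> Bm"
    using amplitude_bounds[OF assms(1) u] bounded_\<beta> by auto
qed (use assms continuous_\<beta> m_pos m_le_M in auto)

definition wavenumber_slope :: "real \<Rightarrow> real" where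
  "wavenumber_slope eps = \<bar>eps\<bar> * (2 * Bm * M^2 / m^2)"

lemma wavenumber_slope_nonneg: "0 \<le> wavenumber_slope eps"
  unfolding wavenumber_slope_def using Bm_nonneg by simp

lemma abs_wavenumber_amplitude_le:
  assumes "continuous_on {0..T} s" "t \<in> {0..T}"
  shows "\<bar>wavenumber eps \<beta> (amplitude s) t\<bar> \<le> wavenumber_slope eps * t"
  unfolding wavenumber_slope_def
  using assms m_pos Bm_nonneg
  by (intro abs_wavenumber_le amplitude_bounds abs_moment_amplitude_le) auto

lemma continuous_on_reduced_rhs:
  assumes s: "continuous_on {0..T} s"
  shows "continuous_on {0..T} (reduced_rhs eps \<gamma> s)"
proof -
  have "continuous_on {0..T} (wavenumber eps \<beta> (amplitude s))"
  proof (rule continuous_on_wavenumber[OF continuous_on_amplitude[OF s] continuous_\<beta>])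
    show "amplitude s t \<noteq> 0" if "t \<in> {0<..T}" for t
      using amplitude_bounds(1)[OF s, of t] that mult_pos_pos[OF m_pos, of t] by auto
  qed (rule abs_wavenumber_amplitude_le[OF s])
  moreover have "continuous_on {0..T} (\<lambda>t. \<beta> (amplitude s t))"
    using continuous_on_compose2[OF continuous_\<beta> continuous_on_amplitude[OF s]] by simp
  ultimately show ?thesis
    unfolding reduced_rhs_def hole_rhs_def by (intro continuous_intros continuous_on_amplitude s)
qed

definition moment_lipschitz :: real where
  "moment_lipschitz = 2 * (M * T) * Bm + (M * T)^2 * LB"

lemma lipschitz_on_square_times_\<beta>:
  "moment_lipschitz-lipschitz_on {-(M * T)..M * T} (\<lambda>x. x^2 * \<beta> x)"
proof -
  have "\<bar>x^2\<bar> \<le> (M * T)^2" "\<bar>\<beta> x\<bar> \<le> Bm" if "x \<in> {-(M * T)..M * T}" for x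
  proof -
    have "\<bar>x\<bar> \<le> M * T" using that by auto
    then show "\<bar>\<beta> x\<bar> \<le> Bm" by (rule bounded_\<beta>)
    have "\<bar>x\<bar>^2 \<le> (M * T)^2" using \<open>\<bar>x\<bar> \<le> M * T\<close> by (intro power_mono) auto
    then show "\<bar>x^2\<bar> \<le> (M * T)^2" by simp
  qed
  then have "(2 * (M * T) * Bm + (M * T)^2 * LB)-lipschitz_on {-(M * T)..M * T} (\<lambda>x. x^2 * \<beta> x)"
    using MT_pos Bm_nonneg
    by (intro lipschitz_on_mult_real lipschitz_on_square_interval lipschitz_\<beta>) auto
  then show ?thesis unfolding moment_lipschitz_def .
qed

definition rhs_lipschitz :: "real \<Rightarrow> real \<Rightarrow> real" where
  "rhs_lipschitz eps \<gamma> =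
     (2 + 6 * (M * T)^2 + (wavenumber_slope eps * T)^2 + \<bar>\<gamma>\<bar> * (Bm + M * T * LB)) * T
     + M * T * (2 * wavenumber_slope eps * T) * (\<bar>eps\<bar> * (2 * (moment_lipschitz / m^2 + 2 * Bm * M^3 * T / m^4)))"

lemma rhs_lipschitz_nonneg: "0 \<le> rhs_lipschitz eps \<gamma>"
  unfolding rhs_lipschitz_def wavenumber_slope_def moment_lipschitz_def
  using MT_pos T_pos Bm_nonneg LB_nonneg m_pos m_le_M by simp

end

context clamped_hole_system
begin

lemma reduced_rhs_diff_le:
  assumes s1: "continuous_on {0..T} s1" and s2: "continuous_on {0..T} s2" and t: "t \<in> {0..T}"
    and D: "\<forall>v\<in>{0..t}. \<bar>s1 v - s2 v\<bar> \<le> D"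
  shows "\<bar>reduced_rhs eps \<gamma> s1 t - reduced_rhs eps \<gamma> s2 t\<bar> \<le> rhs_lipschitz eps \<gamma> * D"
proof -
  define LP where "LP = \<bar>eps\<bar> * (2 * (moment_lipschitz / m^2 + 2 * Bm * M^3 * T / m^4))"
  have D0: "0 \<le> D" using D t by force
  have t0: "0 \<le> t" and tT: "t \<le> T" using t by auto
  have sub: "u \<in> {0..T}" if "u \<in> {0..t}" for u using that tT by auto
  have amplitude_close: "\<bar>amplitude s1 u - amplitude s2 u\<bar> \<le> D * u" if "u \<in> {0..t}" for u
    using amplitude_diff_le[OF s1 s2 sub[OF that]] D that by auto
  have "\<bar>moment \<beta> (amplitude s1) t - moment \<beta> (amplitude s2) t\<bar> \<le> moment_lipschitz * D * t * t"
    using amplitude_bounds(3)[OF s1 sub] amplitude_bounds(3)[OF s2 sub] amplitude_close tT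
    by (intro moment_diff_le[OF t0 _ _ continuous_\<beta> lipschitz_on_square_times_\<beta> _ D0]
        continuous_on_subset[OF continuous_on_amplitude[OF s1]] continuous_on_subset[OF continuous_on_amplitude[OF s2]])
      auto
  then have wave_diff: "\<bar>wavenumber eps \<beta> (amplitude s1) t - wavenumber eps \<beta> (amplitude s2) t\<bar> \<le> LP * D"
    unfolding LP_def using amplitude_close[of t] t
    by (intro wavenumber_diff_le m_pos m_le_M t0 tT D0 Bm_nonneg amplitude_bounds s1 s2 abs_moment_amplitude_le
        lipschitz_on_nonneg[OF lipschitz_on_square_times_\<beta>])
      auto
  have amplitude_diff: "\<bar>amplitude s1 t - amplitude s2 t\<bar> \<le> D * T"
    using amplitude_close[of t] t0 mult_left_mono[OF tT D0] by auto
  have wave_bound: "\<bar>wavenumber eps \<beta> (amplitude s) t\<bar> \<le> wavenumber_slope eps * T"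
    if "continuous_on {0..T} s" for s
    using abs_wavenumber_amplitude_le[OF that t, of eps] mult_left_mono[OF tT wavenumber_slope_nonneg[of eps]]
    by linarith
  have "\<bar>reduced_rhs eps \<gamma> s1 t - reduced_rhs eps \<gamma> s2 t\<bar>
      \<le> (2 + 6 * (M * T)^2 + (wavenumber_slope eps * T)^2 + \<bar>\<gamma>\<bar> * (Bm + M * T * LB))
          * \<bar>amplitude s1 t - amplitude s2 t\<bar>
        + M * T * (2 * (wavenumber_slope eps * T))
          * \<bar>wavenumber eps \<beta> (amplitude s1) t - wavenumber eps \<beta> (amplitude s2) t\<bar>"
    unfolding reduced_rhs_def
    by (intro hole_rhs_diff_le amplitude_bounds s1 s2 t bounded_\<beta> lipschitz_\<beta> wave_bound)
  also have "\<dots> \<le> (2 + 6 * (M * T)^2 + (wavenumber_slope eps * T)^2 + \<bar>\<gamma>\<bar> * (Bm + M * T * LB)) * (D * T)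
        + M * T * (2 * (wavenumber_slope eps * T)) * (LP * D)"
    using wave_diff amplitude_diff MT_pos T_pos Bm_nonneg LB_nonneg wavenumber_slope_nonneg
    by (intro add_mono mult_left_mono) auto
  also have "\<dots> = rhs_lipschitz eps \<gamma> * D"
    unfolding rhs_lipschitz_def LP_def by (simp add: algebra_simps)
  finally show ?thesis .
qed

lemma reduced_fixed_point:
  "\<exists>s. continuous_on {0..T} s \<and> (\<forall>x\<in>{0..T}. s x = s0 + integral {0..x} (reduced_rhs eps \<gamma> s))"
  by (rule volterra_fixed_point[OF _ rhs_lipschitz_nonneg continuous_on_reduced_rhs reduced_rhs_diff_le])
    (use T_pos in auto)

lemma reduced_fixed_point_has_derivative:
  assumes s: "continuous_on {0..T} s" and fixed: "\<forall>x\<in>{0..T}. s x = s0 + integral {0..x} (reduced_rhs eps \<gamma> s)"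
    and x: "x \<in> {0..T}"
  shows "(s has_real_derivative reduced_rhs eps \<gamma> s x) (at x within {0..T})"
proof -
  have "((\<lambda>u. integral {0..u} (reduced_rhs eps \<gamma> s)) has_real_derivative reduced_rhs eps \<gamma> s x)
      (at x within {0..T})"
    unfolding has_real_derivative_iff_has_vector_derivative
    by (rule integral_has_vector_derivative[OF continuous_on_reduced_rhs[OF s] x])
  then have "((\<lambda>u. s0 + integral {0..u} (reduced_rhs eps \<gamma> s)) has_real_derivative reduced_rhs eps \<gamma> s x)
      (at x within {0..T})"
    using DERIV_add[OF DERIV_const] by fastforce
  then show ?thesis
    by (rule has_field_derivative_transform_within[where d = 1]) (use x fixed in auto)
qed

end

section \<open>Closeness to the hole orbit\<close>

definition hole_forcing_bound :: "real \<Rightarrow> real \<Rightarrow> real \<Rightarrow> real \<Rightarrow> real \<Rightarrow> real" where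
  "hole_forcing_bound T m Bm eps \<gamma> = 2 * T * (\<bar>eps\<bar> * (8 * Bm / m^2) * T)^2 + \<bar>\<gamma>\<bar> * (2 * T) * Bm"

definition hole_gronwall_error :: "real \<Rightarrow> real \<Rightarrow> real \<Rightarrow> real" where
  "hole_gronwall_error T s0 c = ((s0 - 1)^2 + c^2 * T) * exp ((4 + 6 * (2 * T + 1)^2) * T)"

lemma hole_orbit_gronwall_bound:
  fixes r s \<sigma> p \<beta> :: "real \<Rightarrow> real"
  assumes T: "0 < T" and t: "t \<in> {0..T}"
    and cont_r: "continuous_on {0..t} r" and cont_s: "continuous_on {0..t} s" and r0: "r 0 = 0" and s0: "s 0 = s0"
    and der_r: "\<And>x. x \<in> {0<..<t} \<Longrightarrow> (r has_real_derivative \<sigma> x) (at x)"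
    and der_s: "\<And>x. x \<in> {0<..<t} \<Longrightarrow> (s has_real_derivative hole_rhs \<gamma> \<beta> (r x) (p x)) (at x)"
    and \<sigma>: "\<And>x. x \<in> {0<..<t} \<Longrightarrow> \<bar>\<sigma> x - (1 - tanh x ^ 2)\<bar> \<le> \<bar>s x - (1 - tanh x ^ 2)\<bar>"
    and bounds: "\<And>x. x \<in> {0<..<t} \<Longrightarrow>
      \<bar>r x\<bar> \<le> 2 * T \<and> \<bar>p x\<bar> \<le> \<bar>eps\<bar> * (8 * Bm / m^2) * T \<and> \<bar>\<beta> (r x)\<bar> \<le> Bm"
    and Bm: "0 \<le> Bm"
    and small: "hole_gronwall_error T s0 (hole_forcing_bound T m Bm eps \<gamma>) \<le> \<rho>^2"
  shows "(r t - tanh t)^2 + (s t - (1 - tanh t ^ 2))^2 \<le> \<rho>^2"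
proof -
  define c where "c = hole_forcing_bound T m Bm eps \<gamma>"
  have c: "0 \<le> c" unfolding c_def hole_forcing_bound_def using T Bm by simp
  have "(r t - tanh t)^2 + (s t - (1 - tanh t ^ 2))^2
      \<le> ((s0 - 1)^2 + c^2 * t) * exp ((4 + 6 * (2 * T + 1)^2) * t)"
  proof (rule tanh_orbit_gronwall[where q = "\<lambda>x. r x * (p x)^2 + \<gamma> * r x * \<beta> (r x)"])
    fix x assume x: "x \<in> {0<..<t}"
    show "(s has_real_derivative - 2 * r x * (1 - r x ^ 2) + (r x * (p x)^2 + \<gamma> * r x * \<beta> (r x))) (at x)"
      using der_s[OF x] by (simp add: hole_rhs_def algebra_simps)
    show "\<bar>r x * (p x)^2 + \<gamma> * r x * \<beta> (r x)\<bar> \<le> c"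
      unfolding c_def hole_forcing_bound_def
      using abs_hole_forcing_le[of "r x" "2 * T" "p x" "\<bar>eps\<bar> * (8 * Bm / m^2) * T" \<beta> Bm \<gamma>] bounds[OF x]
      by (simp add: mult_ac)
    show "\<bar>r x\<bar> \<le> 2 * T + 1" using bounds[OF x] by simp
  qed (use t T c cont_r cont_s r0 s0 der_r \<sigma> in auto)
  also have "\<dots> \<le> ((s0 - 1)^2 + c^2 * T) * exp ((4 + 6 * (2 * T + 1)^2) * T)"
    using t T by (intro mult_mono add_left_mono mult_left_mono) (auto intro!: mult_left_mono)
  also have "\<dots> \<le> \<rho>^2"
    using small unfolding c_def hole_gronwall_error_def .
  finally show ?thesis .
qed

context clamped_hole_system
begin

lemma fixed_point_is_orbit:
  assumes \<beta>: "\<beta> = bracket d1 d3 d4 sst eps sig"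
    and s: "continuous_on {0..T} s"
    and fixed: "\<forall>x\<in>{0..T}. s x = s0 + integral {0..x} (reduced_rhs eps (2 * eps^2 * d1) s)"
    and inside: "\<And>t. t \<in> {0..T} \<Longrightarrow> m \<le> s t \<and> s t \<le> M"
  shows "orbit_from_Sigma d1 d3 d4 sst eps sig s0 T (amplitude s) s (wavenumber eps \<beta> (amplitude s))"
proof -
  define r where "r = amplitude s"
  define psi where "psi = wavenumber eps \<beta> r"
  have r_pos: "0 < r x" if "x \<in> {0<..T}" for x
    using amplitude_bounds(1)[OF s, of x] that mult_pos_pos[OF m_pos, of x] unfolding r_def by auto
  have der_r: "(r has_real_derivative s x) (at x within {0..T})" if "x \<in> {0..T}" for x
    using amplitude_has_derivative[OF s that] inside[OF that] unfolding r_def by simp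
  have der_moment: "(moment \<beta> r has_real_derivative (r x)^2 * \<beta> (r x)) (at x within {0..T})"
    if "x \<in> {0..T}" for x
    unfolding r_def by (rule moment_has_derivative[OF continuous_on_amplitude[OF s] continuous_\<beta> that])
  have der_s: "(s has_real_derivative hole_rhs (2 * eps^2 * d1) \<beta> (r x) (psi x)) (at x within {0..T})"
    if "x \<in> {0..T}" for x
    using reduced_fixed_point_has_derivative[OF s fixed that] unfolding reduced_rhs_def r_def psi_def .
  have "hole_sys_sol d1 d3 d4 sst eps sig {0<..T} r s psi"
    unfolding hole_sys_sol_def
  proof (intro ballI conjI)
    fix x assume x: "x \<in> {0<..T}"
    then have xT: "x \<in> {0..T}" and sub: "{0<..T} \<subseteq> {0..T}" by auto
    show "r x \<noteq> 0" using r_pos[OF x] by simp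
    show "(r has_real_derivative s x) (at x within {0<..T})"
      by (rule DERIV_subset[OF der_r[OF xT] sub])
    show "(s has_real_derivative - 2 * r x * (1 - (r x)^2) + r x * (psi x)^2
        + 2 * eps^2 * d1 * r x * bracket d1 d3 d4 sst eps sig (r x)) (at x within {0<..T})"
      using DERIV_subset[OF der_s[OF xT] sub] by (simp add: hole_rhs_def \<beta>)
    have "((\<lambda>u. 2 * eps * moment \<beta> r u / (r u)^2) has_real_derivative
        (2 * eps * ((r x)^2 * \<beta> (r x)) * (r x)^2 - 2 * eps * moment \<beta> r x * (2 * r x * s x))
          / ((r x)^2 * (r x)^2)) (at x within {0..T})"
      using r_pos[OF x]
      by (auto intro!: derivative_eq_intros der_moment[OF xT] der_r[OF xT] simp: power2_eq_square)
    moreover have "(2 * eps * ((r x)^2 * \<beta> (r x)) * (r x)^2 - 2 * eps * moment \<beta> r x * (2 * r x * s x))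
          / ((r x)^2 * (r x)^2)
        = - 2 * (s x / r x) * psi x + 2 * eps * bracket d1 d3 d4 sst eps sig (r x)"
      using r_pos[OF x] unfolding psi_def wavenumber_def \<beta> by (simp add: field_simps power2_eq_square)
    ultimately show "(psi has_real_derivative - 2 * (s x / r x) * psi x
        + 2 * eps * bracket d1 d3 d4 sst eps sig (r x)) (at x within {0<..T})"
      unfolding psi_def wavenumber_def[abs_def] using DERIV_subset[OF _ sub] by simp
  qed
  moreover have "continuous_on {0..T} psi"
    unfolding psi_def r_def
  proof (rule continuous_on_wavenumber[OF continuous_on_amplitude[OF s] continuous_\<beta>])
    show "amplitude s x \<noteq> 0" if "x \<in> {0<..T}" for x
      using r_pos[OF that] unfolding r_def by simp
  qed (rule abs_wavenumber_amplitude_le[OF s])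
  ultimately show ?thesis
    unfolding orbit_from_Sigma_def r_def[symmetric] psi_def[symmetric]
    using continuous_on_amplitude[OF s] s fixed T_pos
    by (auto simp: r_def psi_def wavenumber_def)
qed

end

lemma orbit_exists:
  assumes T: "0 < T" and m: "0 < m" "2 * m \<le> 1 - tanh T ^ 2"
    and Bm: "\<And>x. \<bar>x\<bar> \<le> 2 * T \<Longrightarrow> \<bar>bracket d1 d3 d4 sst eps sig x\<bar> \<le> Bm"
    and LB: "LB-lipschitz_on {-(2 * T)..2 * T} (bracket d1 d3 d4 sst eps sig)"
    and \<rho>: "0 \<le> \<rho>" "\<rho> < m" "\<rho> < 1"
    and small: "hole_gronwall_error T s0 (hole_forcing_bound T m Bm eps (2 * eps^2 * d1)) \<le> \<rho>^2"
  shows "\<exists>r s psi. orbit_from_Sigma d1 d3 d4 sst eps sig s0 T r s psi"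
proof -
  let ?\<beta> = "bracket d1 d3 d4 sst eps sig"
  have "m \<le> 2" using m(2) by (smt (verit) zero_le_power2)
  moreover have "continuous_on UNIV ?\<beta>"
    using continuous_on_bracket[OF continuous_on_id] by simp
  ultimately interpret clamped_hole_system ?\<beta> m 2 T Bm LB
    using T m Bm LB by unfold_locales (auto simp: mult.commute)
  obtain s where s: "continuous_on {0..T} s"
    and fixed: "\<forall>x\<in>{0..T}. s x = s0 + integral {0..x} (reduced_rhs eps (2 * eps^2 * d1) s)"
    using reduced_fixed_point by blast
  have inside: "m < s t \<and> s t < 2" if t: "t \<in> {0..T}" for t
  proof -
    have "(amplitude s t - tanh t)^2 + (s t - (1 - tanh t ^ 2))^2 \<le> \<rho>^2"
    proof (rule hole_orbit_gronwall_bound[OF T t, where \<sigma> = "\<lambda>x. clamp m 2 (s x)"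
          and p = "wavenumber eps ?\<beta> (amplitude s)" and \<gamma> = "2 * eps^2 * d1" and \<beta> = ?\<beta>])
      fix x assume x: "x \<in> {0<..<t}"
      then have xT: "x \<in> {0..T}" and at: "at x within {0..T} = at x"
        using t by (auto intro!: at_within_Icc_at)
      show "(amplitude s has_real_derivative clamp m 2 (s x)) (at x)"
        using amplitude_has_derivative[OF s xT] unfolding at .
      show "(s has_real_derivative hole_rhs (2 * eps^2 * d1) ?\<beta> (amplitude s x)
          (wavenumber eps ?\<beta> (amplitude s) x)) (at x)"
        using reduced_fixed_point_has_derivative[OF s fixed xT] unfolding at reduced_rhs_def .
      have "tanh x ^ 2 \<le> tanh T ^ 2" using xT by (intro power_mono) auto
      then have "m \<le> 1 - tanh x ^ 2" "1 - tanh x ^ 2 \<le> 2"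
        using m zero_le_power2[of "tanh x"] by linarith+
      then show "\<bar>clamp m 2 (s x) - (1 - tanh x ^ 2)\<bar> \<le> \<bar>s x - (1 - tanh x ^ 2)\<bar>"
        using abs_clamp_real_diff_le[of m 2 "s x" "1 - tanh x ^ 2"] by simp
      have "wavenumber_slope eps * x \<le> wavenumber_slope eps * T"
        using xT wavenumber_slope_nonneg by (intro mult_left_mono) auto
      then show "\<bar>amplitude s x\<bar> \<le> 2 * T \<and> \<bar>wavenumber eps ?\<beta> (amplitude s) x\<bar> \<le> \<bar>eps\<bar> * (8 * Bm / m^2) * T
          \<and> \<bar>?\<beta> (amplitude s x)\<bar> \<le> Bm"
        using amplitude_bounds(3)[OF s xT] abs_wavenumber_amplitude_le[OF s xT, of eps] Bm
        by (auto simp: wavenumber_slope_def mult.commute)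
    next
      have "{0..t} \<subseteq> {0..T}" using t by auto
      then show "continuous_on {0..t} (amplitude s)" "continuous_on {0..t} s"
        using continuous_on_amplitude[OF s] s by (auto intro: continuous_on_subset)
    qed (use fixed T Bm_nonneg small in auto)
    then have "\<bar>s t - (1 - tanh t ^ 2)\<bar> \<le> \<rho>"
      using \<rho>(1) by (rule sum_squares_le_imp_abs_le)
    then show ?thesis
      by (rule near_sech_sq_bounds[OF _ \<rho>(2) m(2) \<rho>(3)]) (use t in auto)
  qed
  then have "orbit_from_Sigma d1 d3 d4 sst eps sig s0 T (amplitude s) s (wavenumber eps ?\<beta> (amplitude s))"
    using inside by (intro fixed_point_is_orbit s fixed) (auto simp: less_imp_le)
  then show ?thesis by blast
qed

lemma initial_deviation_le_hole_gronwall_error: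
  assumes "0 \<le> T"
  shows "(s0 - 1)^2 \<le> hole_gronwall_error T s0 c"
proof -
  have "(s0 - 1)^2 \<le> ((s0 - 1)^2 + c^2 * T) * 1"
    using assms by simp
  also have "\<dots> \<le> ((s0 - 1)^2 + c^2 * T) * exp ((4 + 6 * (2 * T + 1)^2) * T)"
    using assms by (intro mult_left_mono) auto
  finally show ?thesis unfolding hole_gronwall_error_def .
qed

lemma orbit_energy_le:
  assumes orbit: "orbit_from_Sigma d1 d3 d4 sst eps sig s0 T r s psi"
    and T: "0 < T" and m: "0 < m"
    and Bm: "\<And>x. \<bar>x\<bar> \<le> 2 * T \<Longrightarrow> \<bar>bracket d1 d3 d4 sst eps sig x\<bar> \<le> Bm"
    and small: "hole_gronwall_error T s0 (hole_forcing_bound T m Bm eps (2 * eps^2 * d1)) \<le> \<rho>^2"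
    and t: "t \<in> {0..T}" and inside: "\<forall>u\<in>{0..t}. m \<le> s u \<and> s u \<le> 2"
  shows "(r t - tanh t)^2 + (s t - (1 - tanh t ^ 2))^2 \<le> \<rho>^2"
proof -
  let ?\<beta> = "bracket d1 d3 d4 sst eps sig"
  have cont_r: "continuous_on {0..T} r" and cont_s: "continuous_on {0..T} s" and r0: "r 0 = 0"
    and s0: "s 0 = s0" and sol: "hole_sys_sol d1 d3 d4 sst eps sig {0<..T} r s psi"
    using orbit unfolding orbit_from_Sigma_def by auto
  have sub: "{0..u} \<subseteq> {0..T}" "{0<..<u} \<subseteq> {0<..<T}" if "u \<in> {0..t}" for u
    using that t by auto
  have Bm0: "0 \<le> Bm" using Bm[of 0] T by fastforce
  have r_bounds: "m * u \<le> r u \<and> r u \<le> 2 * u" if u: "u \<in> {0..t}" for u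
    using u inside hole_sys_solD(2)[OF sol] sub[OF u] r0
    by (intro primitive_linear_bounds[where s = s] continuous_on_subset[OF cont_r]) auto
  have abs_r: "\<bar>r u\<bar> \<le> 2 * u" "\<bar>r u\<bar> \<le> 2 * T" if u: "u \<in> {0..t}" for u
  proof -
    have "0 \<le> m * u" using m u by simp
    then show "\<bar>r u\<bar> \<le> 2 * u" "\<bar>r u\<bar> \<le> 2 * T" using r_bounds[OF u] u t by auto
  qed
  have psi: "\<bar>psi u\<bar> \<le> \<bar>eps\<bar> * (8 * Bm / m^2) * T" if u: "u \<in> {0..t}" for u
  proof -
    have "\<bar>moment ?\<beta> r u\<bar> \<le> (2 * u)^2 * Bm * u"
      using u abs_r Bm sub[OF u]
      by (intro abs_moment_le continuous_on_subset[OF cont_r] continuous_on_bracket[OF continuous_on_id])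
        (auto simp: subset_iff)
    then have "\<bar>wavenumber eps ?\<beta> r u\<bar> \<le> \<bar>eps\<bar> * (2 * Bm * 2^2 / m^2) * u"
      using m u r_bounds[OF u] Bm0 by (intro abs_wavenumber_le) auto
    also have "\<dots> = \<bar>eps\<bar> * (8 * Bm / m^2) * u"
      by simp
    also have "\<dots> \<le> \<bar>eps\<bar> * (8 * Bm / m^2) * T"
      using u t Bm0 by (intro mult_left_mono) auto
    finally show ?thesis
      using orbit_psi_eq_wavenumber[OF orbit] u t by simp
  qed
  show ?thesis
  proof (rule hole_orbit_gronwall_bound[OF T t, where \<sigma> = s and p = psi and \<beta> = ?\<beta>])
    fix x assume x: "x \<in> {0<..<t}"
    then have xT: "x \<in> {0<..<T}" and xt: "x \<in> {0..t}" using t by auto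
    show "(r has_real_derivative s x) (at x)"
      by (rule hole_sys_solD(2)[OF sol xT])
    have "- 2 * r x * (1 - (r x)^2) + r x * (psi x)^2 + 2 * eps^2 * d1 * r x * ?\<beta> (r x)
        = hole_rhs (2 * eps^2 * d1) ?\<beta> (r x) (psi x)"
      by (simp add: hole_rhs_def)
    then show "(s has_real_derivative hole_rhs (2 * eps^2 * d1) ?\<beta> (r x) (psi x)) (at x)"
      using hole_sys_solD(3)[OF sol xT] by simp
    show "\<bar>r x\<bar> \<le> 2 * T \<and> \<bar>psi x\<bar> \<le> \<bar>eps\<bar> * (8 * Bm / m^2) * T \<and> \<bar>?\<beta> (r x)\<bar> \<le> Bm"
      using abs_r[OF xt] psi[OF xt] Bm by auto
  next
    have "{0..t} \<subseteq> {0..T}" using t by auto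
    then show "continuous_on {0..t} r" "continuous_on {0..t} s"
      using cont_r cont_s by (auto intro: continuous_on_subset)
  qed (use r0 s0 Bm0 small in auto)
qed

lemma orbit_near_tanh:
  assumes orbit: "orbit_from_Sigma d1 d3 d4 sst eps sig s0 T r s psi"
    and T: "0 < T" and m: "0 < m" "2 * m \<le> 1 - tanh T ^ 2"
    and Bm: "\<And>x. \<bar>x\<bar> \<le> 2 * T \<Longrightarrow> \<bar>bracket d1 d3 d4 sst eps sig x\<bar> \<le> Bm"
    and \<rho>: "0 \<le> \<rho>" "\<rho> < m" "\<rho> < 1"
    and small: "hole_gronwall_error T s0 (hole_forcing_bound T m Bm eps (2 * eps^2 * d1)) \<le> \<rho>^2"
    and t: "t \<in> {0..T}"
  shows "\<bar>r t - tanh t\<bar> \<le> \<rho>" "\<bar>s t - (1 - tanh t ^ 2)\<bar> \<le> \<rho>"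
proof -
  have cont_s: "continuous_on {0..T} s" and s0: "s 0 = s0"
    using orbit unfolding orbit_from_Sigma_def by auto
  have energy: "(r t - tanh t)^2 + (s t - (1 - tanh t ^ 2))^2 \<le> \<rho>^2"
    if "t \<in> {0..T}" "\<forall>u\<in>{0..t}. m \<le> s u \<and> s u \<le> 2" for t
    by (rule orbit_energy_le[OF orbit T m(1) Bm small that])
  have "(s0 - 1)^2 \<le> \<rho>^2"
    using initial_deviation_le_hole_gronwall_error[of T s0] small T by (meson less_imp_le order_trans)
  then have "\<bar>s 0 - (1 - tanh 0 ^ 2)\<bar> \<le> \<rho>"
    using \<rho>(1) s0 by (simp add: power2_le_iff_abs_le)
  then have start: "m < s 0 \<and> s 0 < 2"
    using T by (intro near_sech_sq_bounds[OF _ \<rho>(2) m(2) \<rho>(3), of _ 0]) auto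
  have "\<forall>t\<in>{0..T}. m \<le> s t \<and> s t \<le> 2"
  proof (rule continuous_stays_in_interval[OF cont_s start[THEN conjunct1] start[THEN conjunct2]])
    fix t assume "t \<in> {0..T}" "\<forall>u\<in>{0..t}. m \<le> s u \<and> s u \<le> 2"
    then have "\<bar>s t - (1 - tanh t ^ 2)\<bar> \<le> \<rho>"
      using sum_squares_le_imp_abs_le(2)[OF energy \<rho>(1)] by blast
    then show "m < s t \<and> s t < 2"
      using near_sech_sq_bounds[OF _ \<rho>(2) m(2) \<rho>(3)] \<open>t \<in> {0..T}\<close> by auto
  qed
  then have "(r t - tanh t)^2 + (s t - (1 - tanh t ^ 2))^2 \<le> \<rho>^2"
    using t by (intro energy) auto
  then show "\<bar>r t - tanh t\<bar> \<le> \<rho>" "\<bar>s t - (1 - tanh t ^ 2)\<bar> \<le> \<rho>"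
    using \<rho>(1) by (rule sum_squares_le_imp_abs_le)+
qed

section \<open>The endpoint at x = T\<close>

definition tanh_moment_constant :: "real \<Rightarrow> real \<Rightarrow> real \<Rightarrow> real" where
  "tanh_moment_constant d1 d3 d4 =
     4 * (\<bar>d1 + d3\<bar> * (1 + 2^2) + \<bar>d4\<bar> * (1 + 2^4)) + 4 * (\<bar>d1 + d3\<bar> * (2 * 2) + \<bar>d4\<bar> * (4 * 2^3))"

lemma tanh_moment_constant_nonneg: "0 \<le> tanh_moment_constant d1 d3 d4"
  unfolding tanh_moment_constant_def by simp

lemma moment_near_tanh:
  assumes T: "0 \<le> T" and r: "continuous_on {0..T} r"
    and near: "\<And>t. t \<in> {0..T} \<Longrightarrow> \<bar>r t - tanh t\<bar> \<le> \<rho>" and \<rho>: "0 \<le> \<rho>" "\<rho> \<le> 1"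
  shows "\<bar>moment (bracket d1 d3 d4 sst eps sig) r T
      - ((d1 + d3) * tanh T ^ 3 / 3 + d4 * (tanh T ^ 3 / 3 + tanh T ^ 5 / 5))\<bar>
    \<le> (tanh_moment_constant d1 d3 d4 * \<rho> + 4 * \<bar>eps^2 * sst + sig\<bar>) * T"
proof -
  define \<kappa> where "\<kappa> = eps^2 * sst + sig"
  define b where "b = bracket d1 d3 d4 0 0 0"
  define f where "f x = (r x)^2 * bracket d1 d3 d4 sst eps sig (r x) - tanh x ^ 2 * b (tanh x)" for x
  have tanh: "continuous_on {0..T} tanh" by (intro continuous_intros) auto
  have pointwise: "norm (f x) \<le> tanh_moment_constant d1 d3 d4 * \<rho> + 4 * \<bar>\<kappa>\<bar>" if x: "x \<in> {0..T}" for x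
  proof -
    have d: "\<bar>r x - tanh x\<bar> \<le> \<rho>" using near[OF x] .
    have t: "\<bar>tanh x\<bar> \<le> 2" using tanh_real_bounds[of x] by auto
    have r: "\<bar>r x\<bar> \<le> 2" using d tanh_real_bounds[of x] \<rho> by (auto simp: abs_le_iff)
    have "\<bar>(r x)^2 - tanh x ^ 2\<bar> \<le> 4 * \<rho>"
      using abs_square_diff_le[OF r t] d by simp
    moreover have "\<bar>b (r x) - b (tanh x)\<bar> \<le> (\<bar>d1 + d3\<bar> * (2 * 2) + \<bar>d4\<bar> * (4 * 2^3)) * \<rho>"
      unfolding b_def
      by (rule order_trans[OF abs_bracket_diff_le[OF r t] mult_left_mono[OF d]]) simp
    moreover have "\<bar>b (r x)\<bar> \<le> \<bar>d1 + d3\<bar> * (1 + 2^2) + \<bar>d4\<bar> * (1 + 2^4)"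
      using abs_bracket_le[OF r, of d1 d3 d4 0 0 0] unfolding b_def by simp
    moreover have "\<bar>tanh x ^ 2\<bar> \<le> 4"
      using power_mono[OF t abs_ge_zero, of 2] by simp
    ultimately have "\<bar>(r x)^2 * b (r x) - tanh x ^ 2 * b (tanh x)\<bar>
        \<le> 4 * \<rho> * (\<bar>d1 + d3\<bar> * (1 + 2^2) + \<bar>d4\<bar> * (1 + 2^4))
          + 4 * ((\<bar>d1 + d3\<bar> * (2 * 2) + \<bar>d4\<bar> * (4 * 2^3)) * \<rho>)"
      by (rule abs_mult_diff_le)
    moreover have "\<bar>(r x)^2 * \<kappa>\<bar> \<le> 4 * \<bar>\<kappa>\<bar>"
      using power_mono[OF r abs_ge_zero, of 2] by (simp add: abs_mult mult_right_mono)
    moreover have "f x = ((r x)^2 * b (r x) - tanh x ^ 2 * b (tanh x)) + (r x)^2 * \<kappa>"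
      unfolding f_def b_def \<kappa>_def by (subst bracket_eq_unperturbed_plus) (simp add: algebra_simps)
    ultimately have "norm (f x) \<le> 4 * \<rho> * (\<bar>d1 + d3\<bar> * (1 + 2^2) + \<bar>d4\<bar> * (1 + 2^4))
          + 4 * ((\<bar>d1 + d3\<bar> * (2 * 2) + \<bar>d4\<bar> * (4 * 2^3)) * \<rho>) + 4 * \<bar>\<kappa>\<bar>"
      using abs_triangle_ineq[of "(r x)^2 * b (r x) - tanh x ^ 2 * b (tanh x)" "(r x)^2 * \<kappa>"] by simp
    then show ?thesis
      unfolding tanh_moment_constant_def by (simp add: algebra_simps)
  qed
  have "moment (bracket d1 d3 d4 sst eps sig) r T
      - ((d1 + d3) * tanh T ^ 3 / 3 + d4 * (tanh T ^ 3 / 3 + tanh T ^ 5 / 5)) = integral {0..T} f"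
    unfolding f_def moment_def integral_tanh_sq_bracket[OF T, symmetric] b_def
    by (intro integral_diff[symmetric] integrable_continuous_real continuous_intros r tanh)
  also have "\<bar>\<dots>\<bar> \<le> (tanh_moment_constant d1 d3 d4 * \<rho> + 4 * \<bar>\<kappa>\<bar>) * (T - 0)"
  proof -
    have "continuous_on {0..T} f"
      unfolding f_def b_def by (intro continuous_intros r tanh)
    then show ?thesis
      using integral_bound[of 0 T f] pointwise T by simp
  qed
  finally show ?thesis unfolding \<kappa>_def by simp
qed

definition wavenumber_error_constant :: "real \<Rightarrow> real \<Rightarrow> real \<Rightarrow> real" where
  "wavenumber_error_constant d1 d3 d4 =
     4 * (2 + \<bar>d1 + d3\<bar> + 2 * \<bar>d4\<bar>) + 16 * \<bar>(d1 + d3) / 3 + 8 * d4 / 15\<bar>"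

lemma wavenumber_error_constant_nonneg: "0 \<le> wavenumber_error_constant d1 d3 d4"
  unfolding wavenumber_error_constant_def by simp

text \<open>As tanh T = 1 - \<nu> tends to 1, the closed form of the unperturbed moment tends to
  (d1 + d3)/3 + 8 d4/15, half the limiting wavenumber per unit eps.\<close>
lemma wavenumber_at_T_estimate:
  assumes \<nu>: "0 < \<nu>" "\<nu> \<le> 1/8" and \<tau>: "tanh T = 1 - \<nu>" and eps: "0 < eps"
    and R: "\<bar>R - tanh T\<bar> \<le> \<nu>"
    and J: "\<bar>J - ((d1 + d3) * tanh T ^ 3 / 3 + d4 * (tanh T ^ 3 / 3 + tanh T ^ 5 / 5))\<bar> \<le> 2 * \<nu>"
    and p: "R^2 * p = 2 * eps * J"
  shows "\<bar>p - 2/3 * (d1 + d3 + 8/5 * d4) * eps\<bar> \<le> wavenumber_error_constant d1 d3 d4 * \<nu> * eps"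
proof -
  define X0 where "X0 = (d1 + d3) / 3 + 8 * d4 / 15"
  define D where "D = \<bar>d1 + d3\<bar> + 2 * \<bar>d4\<bar>"
  have t3: "\<bar>(tanh T ^ 3 - 1) / 3\<bar> \<le> \<nu>" and t5: "\<bar>(tanh T ^ 5 - 1) / 5\<bar> \<le> \<nu>"
    using abs_one_minus_power_le[of \<nu> 3] abs_one_minus_power_le[of \<nu> 5] \<nu> \<tau> by simp_all
  have first: "\<bar>(d1 + d3) * ((tanh T ^ 3 - 1) / 3)\<bar> \<le> \<bar>d1 + d3\<bar> * \<nu>"
    unfolding abs_mult using t3 by (intro mult_left_mono) auto
  have "\<bar>(tanh T ^ 3 - 1) / 3 + (tanh T ^ 5 - 1) / 5\<bar> \<le> 2 * \<nu>"
    using abs_triangle_ineq[of "(tanh T ^ 3 - 1) / 3" "(tanh T ^ 5 - 1) / 5"] t3 t5 by linarith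
  then have second: "\<bar>d4 * ((tanh T ^ 3 - 1) / 3 + (tanh T ^ 5 - 1) / 5)\<bar> \<le> \<bar>d4\<bar> * (2 * \<nu>)"
    unfolding abs_mult by (intro mult_left_mono) auto
  have "((d1 + d3) * tanh T ^ 3 / 3 + d4 * (tanh T ^ 3 / 3 + tanh T ^ 5 / 5)) - X0
      = (d1 + d3) * ((tanh T ^ 3 - 1) / 3) + d4 * ((tanh T ^ 3 - 1) / 3 + (tanh T ^ 5 - 1) / 5)"
    unfolding X0_def by (simp add: field_simps)
  then have "\<bar>((d1 + d3) * tanh T ^ 3 / 3 + d4 * (tanh T ^ 3 / 3 + tanh T ^ 5 / 5)) - X0\<bar> \<le> D * \<nu>"
    unfolding D_def
    using first second abs_triangle_ineq[of "(d1 + d3) * ((tanh T ^ 3 - 1) / 3)"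
        "d4 * ((tanh T ^ 3 - 1) / 3 + (tanh T ^ 5 - 1) / 5)"]
    by (simp add: algebra_simps)
  then have JX: "\<bar>J - X0\<bar> \<le> (2 + D) * \<nu>"
    using J by (simp add: algebra_simps abs_le_iff)
  have R1: "R \<le> 1" "1 - 2 * \<nu> \<le> R" "3/4 \<le> R"
    using R \<nu> \<tau> by (simp_all add: abs_le_iff)
  then have R2: "1/2 \<le> R^2"
    using power_mono[of "3/4" R 2] by (simp add: power2_eq_square)
  then have R2_pos: "0 < R^2" and inv_R2: "1 / R^2 \<le> 2"
    using R1 by (simp_all add: divide_le_eq)
  have "R^2 \<le> 1" using R1 by (simp add: power_le_one)
  moreover have "1 - R^2 = (1 - R) * (1 + R)" by (simp add: power2_eq_square algebra_simps)
  then have "1 - R^2 \<le> 4 * \<nu>" using R1 mult_mono[of "1 - R" "2 * \<nu>" "1 + R" 2] by simp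
  ultimately have one_minus_R2: "\<bar>1 - R^2\<bar> \<le> 4 * \<nu>" by simp
  have "p - 2/3 * (d1 + d3 + 8/5 * d4) * eps
      = eps * (2 * (J - X0) * (1 / R^2) + 2 * X0 * (1 - R^2) * (1 / R^2))"
    using p R2_pos unfolding X0_def by (simp add: field_simps)
  moreover have "\<bar>2 * (J - X0) * (1 / R^2)\<bar> \<le> 2 * ((2 + D) * \<nu>) * 2"
    unfolding abs_mult using JX inv_R2 R2_pos by (intro mult_mono) auto
  moreover have "\<bar>2 * X0 * (1 - R^2) * (1 / R^2)\<bar> \<le> 2 * \<bar>X0\<bar> * (4 * \<nu>) * 2"
    unfolding abs_mult using one_minus_R2 inv_R2 R2_pos by (intro mult_mono) auto
  moreover have "2 * ((2 + D) * \<nu>) * 2 + 2 * \<bar>X0\<bar> * (4 * \<nu>) * 2 = wavenumber_error_constant d1 d3 d4 * \<nu>"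
    unfolding wavenumber_error_constant_def D_def X0_def by (simp add: algebra_simps)
  ultimately show ?thesis
    using eps abs_triangle_ineq[of "2 * (J - X0) * (1 / R^2)" "2 * X0 * (1 - R^2) * (1 / R^2)"]
    by (simp add: abs_mult mult.commute mult_left_mono)
qed

lemma infdist_graph_le:
  fixes h :: "real \<Rightarrow> real \<times> real"
  assumes p: "\<bar>p\<bar> \<le> a" and h: "dist (h p) (sqrt (1 - p^2 / 2), 0) \<le> \<nu> / 2"
    and R: "\<bar>R - 1\<bar> \<le> 2 * \<nu>" and S: "\<bar>S\<bar> \<le> 3 * \<nu>" and \<nu>: "p^2 \<le> \<nu>" "\<nu> \<le> 1"
  shows "infdist (R, S, p) ((\<lambda>p. (fst (h p), snd (h p), p)) ` {-a..a}) \<le> 7 * \<nu>"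
proof -
  define q where "q = sqrt (1 - p^2 / 2)"
  have "\<bar>fst (h p) - q\<bar> \<le> \<nu> / 2" "\<bar>snd (h p)\<bar> \<le> \<nu> / 2"
    using dist_fst_le[of "h p" "(q, 0)"] dist_snd_le[of "h p" "(q, 0)"] h
    unfolding q_def by (auto simp: dist_real_def)
  moreover have "1 - p^2 / 2 \<le> q" "q \<le> 1"
  proof -
    have "0 \<le> 1 - p^2 / 2" "1 - p^2 / 2 \<le> 1" using \<nu> by auto
    then show "1 - p^2 / 2 \<le> q" "q \<le> 1"
      unfolding q_def using real_sqrt_le_mono[of "(1 - p^2 / 2)^2" "1 - p^2 / 2"]
      by (auto simp: power2_eq_square mult_left_le)
  qed
  ultimately have "\<bar>R - fst (h p)\<bar> \<le> 3 * \<nu>" "\<bar>S - snd (h p)\<bar> \<le> 4 * \<nu>"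
    using R S \<nu> unfolding abs_le_iff by linarith+
  then have "\<bar>R - fst (h p)\<bar> + \<bar>S - snd (h p)\<bar> \<le> 7 * \<nu>"
    by simp
  moreover have "infdist (R, S, p) ((\<lambda>p. (fst (h p), snd (h p), p)) ` {-a..a})
      \<le> dist (R, S, p) (fst (h p), snd (h p), p)"
    using p by (intro infdist_le imageI) (auto simp: abs_le_iff)
  moreover have "dist (R, S, p) (fst (h p), snd (h p), p) \<le> \<bar>R - fst (h p)\<bar> + \<bar>S - snd (h p)\<bar>"
    unfolding dist_Pair_Pair dist_real_def by (simp add: sqrt_sum_squares_le_sum_abs)
  ultimately show ?thesis by linarith
qed

lemma orbit_end_estimates:
  assumes T: "0 < T" "tanh T = 1 - \<nu>" "\<nu> \<le> 1/8" and eps: "0 < eps"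
    and m: "0 < m" "2 * m \<le> 1 - tanh T ^ 2"
    and Bm: "\<And>x. \<bar>x\<bar> \<le> 2 * T \<Longrightarrow> \<bar>bracket d1 d3 d4 sst eps sig x\<bar> \<le> Bm"
    and LB: "LB-lipschitz_on {-(2 * T)..2 * T} (bracket d1 d3 d4 sst eps sig)"
    and \<rho>: "0 \<le> \<rho>" "\<rho> < m" "\<rho> \<le> \<nu>" "tanh_moment_constant d1 d3 d4 * \<rho> * T \<le> \<nu>"
    and small: "hole_gronwall_error T s0 (hole_forcing_bound T m Bm eps (2 * eps^2 * d1)) \<le> \<rho>^2"
    and \<kappa>: "4 * \<bar>eps^2 * sst + sig\<bar> * T \<le> \<nu>"
  shows "\<exists>r s psi. orbit_from_Sigma d1 d3 d4 sst eps sig s0 T r s psi"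
    and "orbit_from_Sigma d1 d3 d4 sst eps sig s0 T r s psi \<Longrightarrow>
      \<bar>r T - 1\<bar> \<le> 2 * \<nu> \<and> \<bar>s T\<bar> \<le> 3 * \<nu>
      \<and> \<bar>psi T - 2/3 * (d1 + d3 + 8/5 * d4) * eps\<bar> \<le> wavenumber_error_constant d1 d3 d4 * \<nu> * eps"
proof -
  have \<nu>: "0 < \<nu>" using T(2) tanh_real_bounds[of T] by auto
  then have \<rho>1: "\<rho> < 1" using \<rho> T(3) by linarith
  show "\<exists>r s psi. orbit_from_Sigma d1 d3 d4 sst eps sig s0 T r s psi"
    using Bm by (intro orbit_exists[OF T(1) m _ LB \<rho>(1,2) \<rho>1 small])
  assume orbit: "orbit_from_Sigma d1 d3 d4 sst eps sig s0 T r s psi"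
  have TT: "T \<in> {0..T}" using T by simp
  have near: "\<bar>r t - tanh t\<bar> \<le> \<rho>" "\<bar>s t - (1 - tanh t ^ 2)\<bar> \<le> \<rho>" if "t \<in> {0..T}" for t
    using Bm that by (intro orbit_near_tanh[OF orbit T(1) m _ \<rho>(1,2) \<rho>1 small]; blast)+
  have r_T: "\<bar>r T - tanh T\<bar> \<le> \<nu>" using near(1)[OF TT] \<rho> by linarith
  have "1 - tanh T ^ 2 = \<nu> * (2 - \<nu>)"
    unfolding T(2) by (simp add: power2_eq_square algebra_simps)
  moreover have "0 \<le> \<nu> * (2 - \<nu>)" "\<nu> * (2 - \<nu>) \<le> 2 * \<nu>"
    using \<nu> T(3) by (auto simp: algebra_simps)
  ultimately have "0 \<le> 1 - tanh T ^ 2" "1 - tanh T ^ 2 \<le> 2 * \<nu>"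
    by simp_all
  then have "\<bar>r T - 1\<bar> \<le> 2 * \<nu>" "\<bar>s T\<bar> \<le> 3 * \<nu>"
    using r_T near(2)[OF TT] \<rho> T(2) by (auto simp: abs_le_iff)
  moreover have "\<bar>psi T - 2/3 * (d1 + d3 + 8/5 * d4) * eps\<bar> \<le> wavenumber_error_constant d1 d3 d4 * \<nu> * eps"
  proof (rule wavenumber_at_T_estimate[OF \<nu> T(3) T(2) eps r_T])
    have "continuous_on {0..T} r" using orbit unfolding orbit_from_Sigma_def by simp
    then have "\<bar>moment (bracket d1 d3 d4 sst eps sig) r T
        - ((d1 + d3) * tanh T ^ 3 / 3 + d4 * (tanh T ^ 3 / 3 + tanh T ^ 5 / 5))\<bar>
        \<le> (tanh_moment_constant d1 d3 d4 * \<rho> + 4 * \<bar>eps^2 * sst + sig\<bar>) * T"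
      using near(1) \<rho>(1) \<rho>1 T(1) by (intro moment_near_tanh) auto
    also have "\<dots> \<le> 2 * \<nu>" using \<rho>(4) \<kappa> by (simp add: algebra_simps)
    finally show "\<bar>moment (bracket d1 d3 d4 sst eps sig) r T
        - ((d1 + d3) * tanh T ^ 3 / 3 + d4 * (tanh T ^ 3 / 3 + tanh T ^ 5 / 5))\<bar> \<le> 2 * \<nu>" .
    show "(r T)^2 * psi T = 2 * eps * moment (bracket d1 d3 d4 sst eps sig) r T"
      by (rule orbit_moment_identity[OF orbit TT])
  qed
  ultimately show "\<bar>r T - 1\<bar> \<le> 2 * \<nu> \<and> \<bar>s T\<bar> \<le> 3 * \<nu>
      \<and> \<bar>psi T - 2/3 * (d1 + d3 + 8/5 * d4) * eps\<bar> \<le> wavenumber_error_constant d1 d3 d4 * \<nu> * eps"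
    by blast
qed

lemma end_point_near_slow_manifold:
  assumes slow: "slow_manifold_family d1 d3 d4 sigst e0 sg0 K a M"
    and eps: "0 < eps" "eps < e0" "K * eps \<le> \<nu> / 2" and sig: "\<bar>sig\<bar> < sg0" and \<nu>: "\<nu> \<le> 1"
    and end_point: "\<bar>R - 1\<bar> \<le> 2 * \<nu>" "\<bar>S\<bar> \<le> 3 * \<nu>" "\<bar>p\<bar> \<le> a" "\<bar>p\<bar> \<le> \<nu>"
  shows "infdist (R, S, p) (M eps sig) \<le> 7 * \<nu>"
proof -
  have "\<exists>h :: real \<Rightarrow> real \<times> real. continuous_on {-a..a} h
      \<and> M eps sig = (\<lambda>p. (fst (h p), snd (h p), p)) ` {-a..a}
      \<and> (\<forall>p\<in>{-a..a}. dist (h p) (sqrt (1 - p^2 / 2), 0) \<le> K * eps)"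
    using slow eps(1,2) sig unfolding slow_manifold_family_def by auto
  then obtain h :: "real \<Rightarrow> real \<times> real" where M: "M eps sig = (\<lambda>p. (fst (h p), snd (h p), p)) ` {-a..a}"
    and h: "\<forall>p\<in>{-a..a}. dist (h p) (sqrt (1 - p^2 / 2), 0) \<le> K * eps"
    by blast
  have "p \<in> {-a..a}" using end_point(3) by (auto simp: abs_le_iff)
  then have "dist (h p) (sqrt (1 - p^2 / 2), 0) \<le> \<nu> / 2"
    using h eps(3) by fastforce
  moreover have "p^2 \<le> \<nu>"
    using end_point(4) \<nu> mult_mono[of "\<bar>p\<bar>" \<nu> "\<bar>p\<bar>" 1] by (simp add: power2_eq_square)
  ultimately show ?thesis
    unfolding M using end_point \<nu> by (intro infdist_graph_le) auto
qed

lemma orbit_at_T_near_slow_manifold: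
  assumes slow: "slow_manifold_family d1 d3 d4 sigst e0 sg0 K a M"
    and T: "0 < T" "tanh T = 1 - \<nu>" "\<nu> \<le> 1/8"
    and eps: "0 < eps" "eps < e0" "K * eps \<le> \<nu> / 2" and sig: "\<bar>sig\<bar> < sg0"
    and m: "0 < m" "2 * m \<le> 1 - tanh T ^ 2"
    and Bm: "\<And>x. \<bar>x\<bar> \<le> 2 * T \<Longrightarrow> \<bar>bracket d1 d3 d4 sst eps sig x\<bar> \<le> Bm"
    and LB: "LB-lipschitz_on {-(2 * T)..2 * T} (bracket d1 d3 d4 sst eps sig)"
    and \<rho>: "0 \<le> \<rho>" "\<rho> < m" "\<rho> \<le> \<nu>" "tanh_moment_constant d1 d3 d4 * \<rho> * T \<le> \<nu>"
    and small: "hole_gronwall_error T s0 (hole_forcing_bound T m Bm eps (2 * eps^2 * d1)) \<le> \<rho>^2"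
    and \<kappa>: "4 * \<bar>eps^2 * sst + sig\<bar> * T \<le> \<nu>"
    and slope: "(\<bar>2/3 * (d1 + d3 + 8/5 * d4)\<bar> + wavenumber_error_constant d1 d3 d4) * eps \<le> min a \<nu>"
    and C: "C = wavenumber_error_constant d1 d3 d4 + 8"
  shows "(\<exists>r s psi. orbit_from_Sigma d1 d3 d4 sst eps sig s0 T r s psi) \<and>
    (\<forall>r s psi. orbit_from_Sigma d1 d3 d4 sst eps sig s0 T r s psi \<longrightarrow>
       infdist (r T, s T, psi T) (M eps sig) \<le> C * \<nu> \<and>
       \<bar>psi T - 2/3 * (d1 + d3 + 8/5 * d4) * eps\<bar> \<le> C * \<nu> * eps + C * (eps + \<bar>sig\<bar>) * eps)"
proof (intro conjI allI impI)
  have \<nu>: "0 < \<nu>" using T(2) tanh_real_bounds[of T] by auto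
  have C1: "0 \<le> wavenumber_error_constant d1 d3 d4" by (rule wavenumber_error_constant_nonneg)
  show "\<exists>r s psi. orbit_from_Sigma d1 d3 d4 sst eps sig s0 T r s psi"
    by (rule orbit_end_estimates(1)[OF T eps(1) m Bm LB \<rho> small \<kappa>]) simp
  fix r s psi assume orbit: "orbit_from_Sigma d1 d3 d4 sst eps sig s0 T r s psi"
  have end_point: "\<bar>r T - 1\<bar> \<le> 2 * \<nu> \<and> \<bar>s T\<bar> \<le> 3 * \<nu>
      \<and> \<bar>psi T - 2/3 * (d1 + d3 + 8/5 * d4) * eps\<bar> \<le> wavenumber_error_constant d1 d3 d4 * \<nu> * eps"
    using orbit_end_estimates(2)[OF T eps(1) m Bm LB \<rho> small \<kappa>, OF _ orbit] by simp
  moreover have "wavenumber_error_constant d1 d3 d4 * \<nu> * eps \<le> C * \<nu> * eps + C * (eps + \<bar>sig\<bar>) * eps"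
    using C \<nu> eps(1) C1 by (intro add_increasing2 mult_nonneg_nonneg mult_right_mono) auto
  ultimately show "\<bar>psi T - 2/3 * (d1 + d3 + 8/5 * d4) * eps\<bar> \<le> C * \<nu> * eps + C * (eps + \<bar>sig\<bar>) * eps"
    by linarith
  have "\<bar>psi T\<bar> \<le> \<bar>psi T - 2/3 * (d1 + d3 + 8/5 * d4) * eps\<bar> + \<bar>2/3 * (d1 + d3 + 8/5 * d4)\<bar> * eps"
    using abs_triangle_ineq[of "psi T - 2/3 * (d1 + d3 + 8/5 * d4) * eps" "2/3 * (d1 + d3 + 8/5 * d4) * eps"]
      eps(1) by (simp add: abs_mult)
  also have "\<dots> \<le> \<bar>2/3 * (d1 + d3 + 8/5 * d4)\<bar> * eps + wavenumber_error_constant d1 d3 d4 * \<nu> * eps"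
    using end_point by auto
  also have "\<dots> \<le> (\<bar>2/3 * (d1 + d3 + 8/5 * d4)\<bar> + wavenumber_error_constant d1 d3 d4) * eps"
  proof -
    have "\<nu> * wavenumber_error_constant d1 d3 d4 \<le> wavenumber_error_constant d1 d3 d4"
      using \<nu> T(3) C1 by (intro mult_left_le_one_le) auto
    then show ?thesis using eps(1) by (simp add: algebra_simps)
  qed
  finally have "\<bar>psi T\<bar> \<le> a" "\<bar>psi T\<bar> \<le> \<nu>" using slope by auto
  then have "infdist (r T, s T, psi T) (M eps sig) \<le> 7 * \<nu>"
    using end_point T(3) by (intro end_point_near_slow_manifold[OF slow eps sig]) auto
  also have "\<dots> \<le> C * \<nu>"
    using C C1 \<nu> by (intro mult_right_mono) auto
  finally show "infdist (r T, s T, psi T) (M eps sig) \<le> C * \<nu>" .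
qed

lemma tanh_comparison_radius_exists:
  fixes T \<nu> L :: real
  assumes T: "0 < T" and \<nu>: "0 < \<nu>" and L: "0 \<le> L"
  obtains m \<rho> where "0 < m" "2 * m \<le> 1 - tanh T ^ 2"
    and "0 < \<rho>" "\<rho> < m" "\<rho> \<le> \<nu>" "L * \<rho> * T \<le> \<nu>"
proof -
  define m where "m = (1 - tanh T ^ 2) / 2"
  have m: "0 < m" "2 * m \<le> 1 - tanh T ^ 2"
    unfolding m_def using tanh_real_bounds[of T] by (auto simp: abs_square_less_1)
  define \<rho> where "\<rho> = min (m / 2) (\<nu> / (L * T + 1))"
  have pos: "0 < L * T + 1" using L T by (simp add: add_nonneg_pos)
  have \<rho>: "0 < \<rho>" "\<rho> < m" using m \<nu> pos unfolding \<rho>_def by auto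
  have "\<rho> \<le> \<nu> / (L * T + 1)" unfolding \<rho>_def by simp
  then have "L * \<rho> * T + \<rho> \<le> \<nu>" using pos by (simp add: field_simps)
  moreover have "0 \<le> L * \<rho> * T" using L T \<rho> by simp
  ultimately have "\<rho> \<le> \<nu>" "L * \<rho> * T \<le> \<nu>" using \<rho> by linarith+
  with m \<rho> show ?thesis by (rule that)
qed

lemma abs_perturbation_le:
  fixes sst eps sig Bs :: real
  assumes sst: "\<bar>sst\<bar> \<le> Bs" and eps: "eps^2 \<le> 1" and sig: "\<bar>sig\<bar> < 1"
  shows "\<bar>eps^2 * sst + sig\<bar> \<le> eps^2 * \<bar>Bs\<bar> + \<bar>sig\<bar>" "\<bar>eps^2 * sst + sig\<bar> \<le> Bs + 1"
proof -
  have "\<bar>eps^2 * sst\<bar> \<le> eps^2 * \<bar>Bs\<bar>" "\<bar>eps^2 * sst\<bar> \<le> Bs"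
    using sst eps mult_left_le_one_le[of "\<bar>sst\<bar>" "eps^2"] mult_left_mono[OF sst, of "eps^2"]
    by (auto simp: abs_mult)
  then show "\<bar>eps^2 * sst + sig\<bar> \<le> eps^2 * \<bar>Bs\<bar> + \<bar>sig\<bar>" "\<bar>eps^2 * sst + sig\<bar> \<le> Bs + 1"
    using sig abs_triangle_ineq[of "eps^2 * sst" sig] by linarith+
qed

lemma hole_orbit_at_T:
  fixes d1 d3 d4 :: real and sigst :: "real \<Rightarrow> real"
    and M :: "real \<Rightarrow> real \<Rightarrow> (real \<times> real \<times> real) set"
  assumes Bs: "\<forall>eps\<in>{0<..<1}. \<bar>sigst eps\<bar> \<le> Bs"
    and slow: "slow_manifold_family d1 d3 d4 sigst e0 sg0 K a M"
    and C: "C = wavenumber_error_constant d1 d3 d4 + 8"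
  shows "\<forall>\<nu>\<in>{0<..<1/8}. \<forall>T. T > 0 \<and> 1 - tanh T = \<nu> \<longrightarrow>
    (\<exists>\<epsilon>1>0. \<exists>\<sigma>1>0. \<exists>\<delta>>0.
      \<forall>eps\<in>{0<..<\<epsilon>1}. \<forall>sig. \<bar>sig\<bar> < \<sigma>1 \<longrightarrow> (\<forall>s0. \<bar>s0 - 1\<bar> < \<delta> \<longrightarrow>
        (\<exists>r s psi. orbit_from_Sigma d1 d3 d4 (sigst eps) eps sig s0 T r s psi) \<and>
        (\<forall>r s psi. orbit_from_Sigma d1 d3 d4 (sigst eps) eps sig s0 T r s psi \<longrightarrow>
           infdist (r T, s T, psi T) (M eps sig) \<le> C * \<nu> \<and>
           \<bar>psi T - 2/3 * (d1 + d3 + 8/5 * d4) * eps\<bar> \<le> C * \<nu> * eps + C * (eps + \<bar>sig\<bar>) * eps)))"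
proof (intro ballI allI impI, goal_cases)
  case (1 \<nu> T)
  then have T: "0 < T" "tanh T = 1 - \<nu>" "\<nu> \<le> 1/8" and \<nu>: "0 < \<nu>" by auto
  have e0: "0 < e0" and sg0: "0 < sg0" and a: "0 < a"
    using slow unfolding slow_manifold_family_def by auto
  obtain m \<rho> where m: "0 < m" "2 * m \<le> 1 - tanh T ^ 2"
    and \<rho>: "0 < \<rho>" "\<rho> < m" "\<rho> \<le> \<nu>" "tanh_moment_constant d1 d3 d4 * \<rho> * T \<le> \<nu>"
    using tanh_comparison_radius_exists[OF T(1) \<nu> tanh_moment_constant_nonneg] .
  define Bm where "Bm = \<bar>d1 + d3\<bar> * (1 + (2 * T)^2) + \<bar>d4\<bar> * (1 + (2 * T)^4) + (Bs + 1)"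
  define LB where "LB = \<bar>d1 + d3\<bar> * (2 * (2 * T)) + \<bar>d4\<bar> * (4 * (2 * T)^3)"
  define E where "E = exp ((4 + 6 * (2 * T + 1)^2) * T)"
  define W where "W = \<bar>2/3 * (d1 + d3 + 8/5 * d4)\<bar> + wavenumber_error_constant d1 d3 d4 + 1"
  have W: "0 < W"
    unfolding W_def using wavenumber_error_constant_nonneg[of d1 d3 d4] abs_ge_zero by linarith
  define P where "P eps \<longleftrightarrow> eps < 1 \<and> eps < e0 \<and> (hole_forcing_bound T m Bm eps (2 * eps^2 * d1))^2 * T * E < \<rho>^2 / 2
    \<and> 4 * eps^2 * \<bar>Bs\<bar> * T < \<nu> / 2 \<and> \<bar>K\<bar> * eps < \<nu> / 2 \<and> eps * W < a \<and> eps * W < \<nu>" for eps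
  define Q where "Q sig \<longleftrightarrow> \<bar>sig\<bar> < 1 \<and> \<bar>sig\<bar> < sg0 \<and> 4 * \<bar>sig\<bar> * T < \<nu> / 2" for sig
  define R where "R s0 \<longleftrightarrow> (s0 - 1)^2 * E < \<rho>^2 / 2" for s0
  have evP: "eventually P (at_right 0)"
    unfolding P_def using e0 \<rho> \<nu> a
    by (intro eventually_conj order_tendstoD(2))
      (auto simp: hole_forcing_bound_def intro!: tendsto_eq_intros)
  have evQ: "eventually Q (nhds 0)"
    unfolding Q_def using sg0 \<nu> T
    by (intro eventually_conj order_tendstoD(2)) (auto intro!: tendsto_eq_intros filterlim_ident)
  have evR: "eventually R (nhds 1)"
    unfolding R_def using \<rho> by (intro order_tendstoD(2)) (auto intro!: tendsto_eq_intros filterlim_ident)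
  have estimate: "(\<exists>r s psi. orbit_from_Sigma d1 d3 d4 (sigst eps) eps sig s0 T r s psi) \<and>
      (\<forall>r s psi. orbit_from_Sigma d1 d3 d4 (sigst eps) eps sig s0 T r s psi \<longrightarrow>
         infdist (r T, s T, psi T) (M eps sig) \<le> C * \<nu> \<and>
         \<bar>psi T - 2/3 * (d1 + d3 + 8/5 * d4) * eps\<bar> \<le> C * \<nu> * eps + C * (eps + \<bar>sig\<bar>) * eps)"
    if eps0: "0 < eps" and P: "P eps" and Q: "Q sig" and R: "R s0" for eps sig s0
  proof (rule orbit_at_T_near_slow_manifold[OF slow T eps0 _ _ _ m _ _ \<rho>(1)[THEN less_imp_le] \<rho>(2-4)
        _ _ _ C])
    have "\<bar>sigst eps\<bar> \<le> Bs" "eps^2 \<le> 1" "\<bar>sig\<bar> < 1"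
      using Bs P Q eps0 unfolding P_def Q_def by (auto simp: power_le_one)
    note \<kappa> = abs_perturbation_le[OF this]
    show "\<bar>bracket d1 d3 d4 (sigst eps) eps sig x\<bar> \<le> Bm" if "\<bar>x\<bar> \<le> 2 * T" for x
      using abs_bracket_le[OF that, of d1 d3 d4 "sigst eps" eps sig] \<kappa>(2) unfolding Bm_def by linarith
    show "LB-lipschitz_on {-(2 * T)..2 * T} (bracket d1 d3 d4 (sigst eps) eps sig)"
      unfolding LB_def using T by (intro lipschitz_on_bracket) simp
    show "hole_gronwall_error T s0 (hole_forcing_bound T m Bm eps (2 * eps^2 * d1)) \<le> \<rho>^2"
      using P R unfolding P_def R_def hole_gronwall_error_def E_def[symmetric] by (simp add: algebra_simps)
    have "4 * \<bar>eps^2 * sigst eps + sig\<bar> * T \<le> 4 * (eps^2 * \<bar>Bs\<bar> + \<bar>sig\<bar>) * T"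
      using \<kappa>(1) T by (intro mult_right_mono) auto
    also have "\<dots> = 4 * eps^2 * \<bar>Bs\<bar> * T + 4 * \<bar>sig\<bar> * T"
      by (simp add: algebra_simps)
    finally show "4 * \<bar>eps^2 * sigst eps + sig\<bar> * T \<le> \<nu>"
      using P Q unfolding P_def Q_def by linarith
    show "K * eps \<le> \<nu> / 2"
      using P eps0 mult_right_mono[OF abs_ge_self[of K], of eps] unfolding P_def by linarith
    show "(\<bar>2/3 * (d1 + d3 + 8/5 * d4)\<bar> + wavenumber_error_constant d1 d3 d4) * eps \<le> min a \<nu>"
      using P eps0 unfolding P_def W_def by (simp add: algebra_simps)
  qed (use P Q in \<open>auto simp: P_def Q_def\<close>)
  show ?case
    by (rule eventually_small_parameters[OF evP evQ evR estimate])
qed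



theorem proposition2p4:
  fixes d1 d3 d4 :: real and sigst :: "real \<Rightarrow> real"
    and M :: "real \<Rightarrow> real \<Rightarrow> (real \<times> real \<times> real) set"
    and e0 sg0 K a :: real
  assumes sigst_bdd: "\<exists>B. \<forall>eps\<in>{0<..<1}. \<bar>sigst eps\<bar> \<le> B"
    and slow: "slow_manifold_family d1 d3 d4 sigst e0 sg0 K a M"
  shows "\<exists>\<nu>0>0. \<exists>C>0. \<forall>\<nu>\<in>{0<..<\<nu>0}. \<forall>T. T > 0 \<and> 1 - tanh T = \<nu> \<longrightarrow>
           (\<exists>\<epsilon>1>0. \<exists>\<sigma>1>0. \<exists>\<delta>>0.
             \<forall>eps\<in>{0<..<\<epsilon>1}. \<forall>sig. \<bar>sig\<bar> < \<sigma>1 \<longrightarrow> (\<forall>s0. \<bar>s0 - 1\<bar> < \<delta> \<longrightarrow>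
               (\<exists>r s psi. orbit_from_Sigma d1 d3 d4 (sigst eps) eps sig s0 T r s psi) \<and>
               (\<forall>r s psi. orbit_from_Sigma d1 d3 d4 (sigst eps) eps sig s0 T r s psi \<longrightarrow>
                  infdist (r T, s T, psi T) (M eps sig) \<le> C * \<nu> \<and>
                  \<bar>psi T - 2/3 * (d1 + d3 + 8/5 * d4) * eps\<bar>
                     \<le> C * \<nu> * eps + C * (eps + \<bar>sig\<bar>) * eps)))"
proof -
  obtain Bs where Bs: "\<forall>eps\<in>{0<..<1}. \<bar>sigst eps\<bar> \<le> Bs" using sigst_bdd by blast
  define C where "C = wavenumber_error_constant d1 d3 d4 + 8"
  have "(0::real) < 1/8" "0 < C"
    unfolding C_def using wavenumber_error_constant_nonneg[of d1 d3 d4] by simp_all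
  then show ?thesis
    by (intro exI[of _ "1/8"] exI[of _ C] conjI hole_orbit_at_T[OF Bs slow C_def])
qed

end
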